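(* Let $\mathcal{C}$ be a harmonic curve in $\mathbb{P}^2$ and let $P\mapsto p$ be a polarity of $\mathbb{P}^2$ whose set of absolute points $\{P: P\in p\}$ is exactly $\mathcal{C}$. Let $\mathcal{Q}$ be a quadrangle with vertices $A,C,B,D$ (in cyclic order) all lying on $\mathcal{C}$. Then $\mathcal{C}_{\mathcal{Q}}=\mathcal{C}$ if and only if the pole of the diagonal line $A\vee B$ lies on the other diagonal line $C\vee D$. Moreover, for any three distinct points $A,C,B\in\mathcal{C}$, letting $Q$ be the pole of $q=A\vee B$ (equivalently $Q=a\wedge b$, where $a,b$ are the polars of $A,B$) and $D=C\cdot\rho_{Q,q}$, the points $A,C,B,D$ are in general position, $D\in\mathcal{C}$, and the quadrangle $\mathcal{Q}$ with vertices $A,C,B,D$ satisfies $\mathcal{C}_{\mathcal{Q}}=\mathcal{C}$.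
   Context: $\mathbb{P}^2$ denotes the projective plane over a field $F$ with $\operatorname{char}F\neq 2$. For distinct points $X,Y$, $X\vee Y$ is the line through them; for distinct lines $\ell,m$, $\ell\wedge m$ is their common point. Maps act on the right. Four distinct collinear points $A,C,B,D$ form a harmonic set with conjugate pairs $\{A,B\}$ and $\{C,D\}$ if the cross-ratio $(A,B;C,D)=-1$. Four distinct concurrent lines form a harmonic pencil with given conjugate pairs if some (equivalently every) line not through their common point meets them in a harmonic set with the corresponding conjugate pairs. For a point $P$ and a line $m$ with $P\notin m$, the harmonic reflection $\rho_{P,m}$ of $\mathbb{P}^2$ fixes $P$ and every point of $m$ and sends every other point $X$ to the harmonic conjugate of $X$ with respect to $P$ and $(X\vee P)\wedge m$. A polarity of $\mathbb{P}^2$ is a bijection $P\mapsto p$ from points to lines such that $P\in q\iff Q\in p$ for all points $P,Q$; $p$ is the polar of $P$ and $P$ the pole of $p$. A quadrangle $\mathcal{Q}$ with vertices $A,C,B,D$ (in cyclic order) consists of four points in general position (no three collinear) together with this cyclic order up to reversal; its diagonal lines are $A\vee B$ and $C\vee D$. The harmonic curve $\mathcal{C}_{\mathcal{Q}}$ is the set consisting of $A,C,B,D$ together with all points $Z\notin\{A,B,C,D\}$ such that $Z\vee A, Z\vee C, Z\vee B, Z\vee D$ are four distinct lines forming a harmonic pencil with conjugate pairs $\{Z\vee A,Z\vee B\}$ and $\{Z\vee C,Z\vee D\}$. A harmonic curve is any set of the form $\mathcal{C}_{\mathcal{Q}}$ (every harmonic curve is the set of absolute points of some polarity). *)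

theory Defs
  imports Main
begin

type_synonym 'a vec3 = "'a \<times> 'a \<times> 'a"

definition smult3 :: "'a::field \<Rightarrow> 'a vec3 \<Rightarrow> 'a vec3" where
  "smult3 c v = (case v of (x, y, z) \<Rightarrow> (c * x, c * y, c * z))"

definition add3 :: "'a::field vec3 \<Rightarrow> 'a vec3 \<Rightarrow> 'a vec3" where
  "add3 v w = (case v of (x, y, z) \<Rightarrow> case w of (x', y', z') \<Rightarrow> (x + x', y + y', z + z'))"

definition dot3 :: "'a::field vec3 \<Rightarrow> 'a vec3 \<Rightarrow> 'a" where
  "dot3 v w = (case v of (x, y, z) \<Rightarrow> case w of (x', y', z') \<Rightarrow> x * x' + y * y' + z * z')"

typedef (overloaded) ('a::field) proj =
  "{S :: 'a vec3 set. \<exists>v. v \<noteq> (0, 0, 0) \<and> S = {smult3 c v | c. True}}"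
  by (rule exI[of _ "{smult3 c (1, 0, 0) | c. True}"], rule CollectI, rule exI[of _ "(1, 0, 0)"]) simp

text \<open>Both points and lines of P^2 are represented by elements of type proj
(a line is given by a nonzero covector up to scaling).\<close>

type_synonym 'a point = "'a proj"
type_synonym 'a line = "'a proj"

definition rep :: "'a::field proj \<Rightarrow> 'a vec3" where
  "rep P = (SOME v. v \<noteq> (0, 0, 0) \<and> v \<in> Rep_proj P)"

definition incid :: "'a::field point \<Rightarrow> 'a line \<Rightarrow> bool" where
  "incid P l \<longleftrightarrow> dot3 (rep P) (rep l) = 0"

definition join :: "'a::field point \<Rightarrow> 'a point \<Rightarrow> 'a line" where
  "join X Y = (THE l. incid X l \<and> incid Y l)"

definition meet :: "'a::field line \<Rightarrow> 'a line \<Rightarrow> 'a point" where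
  "meet l m = (THE P. incid P l \<and> incid P m)"

definition collinear3 :: "'a::field point \<Rightarrow> 'a point \<Rightarrow> 'a point \<Rightarrow> bool" where
  "collinear3 X Y Z \<longleftrightarrow> (\<exists>l. incid X l \<and> incid Y l \<and> incid Z l)"

definition collinear4 :: "'a::field point \<Rightarrow> 'a point \<Rightarrow> 'a point \<Rightarrow> 'a point \<Rightarrow> bool" where
  "collinear4 X Y Z W \<longleftrightarrow> (\<exists>l. incid X l \<and> incid Y l \<and> incid Z l \<and> incid W l)"

definition cross_ratio :: "'a::field point \<Rightarrow> 'a point \<Rightarrow> 'a point \<Rightarrow> 'a point \<Rightarrow> 'a" where
  "cross_ratio A B C D =
     (THE r. \<exists>a b c d.
        rep C = add3 (smult3 a (rep A)) (smult3 b (rep B)) \<and>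
        rep D = add3 (smult3 c (rep A)) (smult3 d (rep B)) \<and>
        r = (b * c) / (a * d))"

definition harmonic_set :: "'a::field point \<Rightarrow> 'a point \<Rightarrow> 'a point \<Rightarrow> 'a point \<Rightarrow> bool" where
  "harmonic_set A B C D \<longleftrightarrow>
     distinct [A, B, C, D] \<and> collinear4 A B C D \<and> cross_ratio A B C D = -1"

definition harmonic_pencil :: "'a::field line \<Rightarrow> 'a line \<Rightarrow> 'a line \<Rightarrow> 'a line \<Rightarrow> bool" where
  "harmonic_pencil l1 l2 l3 l4 \<longleftrightarrow>
     distinct [l1, l2, l3, l4] \<and>
     (\<exists>Z. incid Z l1 \<and> incid Z l2 \<and> incid Z l3 \<and> incid Z l4 \<and>
        (\<exists>m. \<not> incid Z m \<and>
             harmonic_set (meet l1 m) (meet l2 m) (meet l3 m) (meet l4 m)))"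

definition harm_conj :: "'a::field point \<Rightarrow> 'a point \<Rightarrow> 'a point \<Rightarrow> 'a point" where
  "harm_conj P M X = (THE Y. harmonic_set P M X Y)"

definition harm_refl :: "'a::field point \<Rightarrow> 'a line \<Rightarrow> 'a point \<Rightarrow> 'a point" where
  "harm_refl P m X =
     (if X = P \<or> incid X m then X else harm_conj P (meet (join X P) m) X)"

definition polarity :: "('a::field point \<Rightarrow> 'a line) \<Rightarrow> bool" where
  "polarity pol \<longleftrightarrow> bij pol \<and> (\<forall>P Q. incid P (pol Q) \<longleftrightarrow> incid Q (pol P))"

definition absolute_points :: "('a::field point \<Rightarrow> 'a line) \<Rightarrow> 'a point set" where
  "absolute_points pol = {P. incid P (pol P)}"

definition pole :: "('a::field point \<Rightarrow> 'a line) \<Rightarrow> 'a line \<Rightarrow> 'a point" where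
  "pole pol q = inv pol q"

text \<open>Quadrangles: four points in general position (no three collinear), given in
cyclic order A, C, B, D; the diagonal lines are A \<or> B and C \<or> D.\<close>
definition general_position :: "'a::field point \<Rightarrow> 'a point \<Rightarrow> 'a point \<Rightarrow> 'a point \<Rightarrow> bool" where
  "general_position A C B D \<longleftrightarrow>
     distinct [A, C, B, D] \<and>
     \<not> collinear3 A C B \<and> \<not> collinear3 A C D \<and> \<not> collinear3 A B D \<and> \<not> collinear3 C B D"

definition hcurve :: "'a::field point \<Rightarrow> 'a point \<Rightarrow> 'a point \<Rightarrow> 'a point \<Rightarrow> 'a point set" where
  "hcurve A C B D =
     {A, C, B, D} \<union>
     {Z. Z \<notin> {A, B, C, D} \<and>
         harmonic_pencil (join Z A) (join Z B) (join Z C) (join Z D)}"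

definition is_harmonic_curve :: "'a::field point set \<Rightarrow> bool" where
  "is_harmonic_curve S \<longleftrightarrow>
     (\<exists>A C B D. general_position A C B D \<and> S = hcurve A C B D)"

end

theory Submission
  imports Defs
begin

text \<open>Choose homogeneous coordinates in which the quadrangle is the frame \<open>a, b, c, a + b + c\<close>,
  and give a point \<open>z\<close> the coordinates \<open>k1, k2, k3\<close> with respect to \<open>a, b, c\<close>. Computing the
  cross-ratio of the pencil joining \<open>z\<close> to the four vertices shows that the harmonic curve is
  the conic \<open>2 k1 k2 - k1 k3 - k2 k3 = 0\<close>; so every harmonic curve is the conic \<open>\<beta>(z, z) = 0\<close>
  of a nondegenerate symmetric bilinear form. A polarity whose absolute points form this conic
  sends every conic point to its tangent, because its polar meets the conic in that point only.

  If the vertices lie on the conic, then with \<open>\<lambda> = \<beta>(a, b)\<close>, \<open>\<mu> = \<beta>(a, c)\<close>, \<open>\<nu> = \<beta>(b, c)\<close>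
  the conic reads \<open>\<lambda> k1 k2 + \<mu> k1 k3 + \<nu> k2 k3 = 0\<close> with \<open>\<lambda> + \<mu> + \<nu> = 0\<close>, and both
  the equality of the two curves and the incidence of the pole of \<open>A \<or> B\<close> with \<open>C \<or> D\<close>
  amount to \<open>\<mu> = \<nu>\<close>. For the construction, the harmonic reflection in the pole \<open>Q\<close> of
  \<open>q = A \<or> B\<close> and in \<open>q\<close> multiplies \<open>\<beta>(x, x)\<close> by a nonzero square, so it maps \<open>C\<close> to a
  fourth conic point \<open>D\<close>, and \<open>D\<close> lies on \<open>C \<or> Q\<close>.\<close>

section \<open>Vectors in \<open>F\<^sup>3\<close>\<close>

lemma smult3_apply [simp]: "smult3 c (x, y, z) = (c * x, c * y, c * z)"
  by (simp add: smult3_def)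

lemma add3_apply [simp]: "add3 (x, y, z) (x', y', z') = (x + x', y + y', z + z')"
  by (simp add: add3_def)

lemma dot3_apply [simp]: "dot3 (x, y, z) (x', y', z') = x * x' + y * y' + z * z'"
  by (simp add: dot3_def)

definition cross3 :: "'a::field vec3 \<Rightarrow> 'a vec3 \<Rightarrow> 'a vec3" where
  "cross3 v w = (case v of (x1, x2, x3) \<Rightarrow> case w of (y1, y2, y3) \<Rightarrow>
     (x2 * y3 - x3 * y2, x3 * y1 - x1 * y3, x1 * y2 - x2 * y1))"

lemma cross3_apply [simp]:
  "cross3 (x1, x2, x3) (y1, y2, y3) = (x2 * y3 - x3 * y2, x3 * y1 - x1 * y3, x1 * y2 - x2 * y1)"
  by (simp add: cross3_def)

definition det3 :: "'a::field vec3 \<Rightarrow> 'a vec3 \<Rightarrow> 'a vec3 \<Rightarrow> 'a" where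
  "det3 u v w = dot3 (cross3 u v) w"

definition lincomb :: "'a::field \<Rightarrow> 'a vec3 \<Rightarrow> 'a \<Rightarrow> 'a vec3 \<Rightarrow> 'a vec3" where
  "lincomb a u b v = add3 (smult3 a u) (smult3 b v)"

lemma smult3_one [simp]: "smult3 1 v = v"
  by (cases v rule: prod_cases3) simp

lemma smult3_zero [simp]: "smult3 0 v = (0, 0, 0)"
  by (cases v rule: prod_cases3) simp

lemma smult3_smult3 [simp]: "smult3 a (smult3 b v) = smult3 (a * b) v"
  by (cases v rule: prod_cases3) simp

lemma smult3_eq_zero_iff: "smult3 c v = (0, 0, 0) \<longleftrightarrow> c = 0 \<or> v = (0, 0, 0)"
  by (cases v rule: prod_cases3) auto

lemma smult3_cancel_left: "k \<noteq> 0 \<Longrightarrow> smult3 k v = smult3 k w \<longleftrightarrow> v = w"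
  by (cases v rule: prod_cases3, cases w rule: prod_cases3) simp

lemma add3_zero_left [simp]: "add3 (0, 0, 0) v = v"
  by (cases v rule: prod_cases3) simp

lemma add3_zero_right [simp]: "add3 v (0, 0, 0) = v"
  by (cases v rule: prod_cases3) simp

lemma dot3_zero_left [simp]: "dot3 (0, 0, 0) x = 0"
  by (cases x rule: prod_cases3) simp

lemma dot3_commute: "dot3 v w = dot3 w v"
  by (cases v rule: prod_cases3, cases w rule: prod_cases3) (simp add: algebra_simps)

lemma dot3_smult3_left: "dot3 (smult3 k v) w = k * dot3 v w"
  by (cases v rule: prod_cases3, cases w rule: prod_cases3) (simp add: algebra_simps)

lemma dot3_smult3_right: "dot3 v (smult3 k w) = k * dot3 v w"
  by (cases v rule: prod_cases3, cases w rule: prod_cases3) (simp add: algebra_simps)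

lemma dot3_zero_right [simp]: "dot3 x (0, 0, 0) = 0"
  by (cases x rule: prod_cases3) simp

lemma dot3_lincomb_left: "dot3 (lincomb a u b v) w = a * dot3 u w + b * dot3 v w"
  unfolding lincomb_def
  by (cases u rule: prod_cases3, cases v rule: prod_cases3, cases w rule: prod_cases3)
    (simp add: algebra_simps)

lemma dot3_lincomb_right: "dot3 w (lincomb a u b v) = a * dot3 w u + b * dot3 w v"
  by (simp add: dot3_commute[of w] dot3_lincomb_left)

lemma cross3_self [simp]: "cross3 x x = (0, 0, 0)"
  by (cases x rule: prod_cases3) (simp add: algebra_simps)

lemma cross3_zero_right [simp]: "cross3 x (0, 0, 0) = (0, 0, 0)"
  by (cases x rule: prod_cases3) simp

lemma cross3_zero_left [simp]: "cross3 (0, 0, 0) x = (0, 0, 0)"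
  by (cases x rule: prod_cases3) simp

lemma cross3_commute: "cross3 y x = smult3 (-1) (cross3 x y)"
  by (cases x rule: prod_cases3, cases y rule: prod_cases3) (simp add: algebra_simps)

lemma cross3_smult3_right: "cross3 z (smult3 k x) = smult3 k (cross3 z x)"
  by (cases x rule: prod_cases3, cases z rule: prod_cases3) (simp add: algebra_simps)

lemma cross3_smult3_left: "cross3 (smult3 k x) z = smult3 k (cross3 x z)"
  by (cases x rule: prod_cases3, cases z rule: prod_cases3) (simp add: algebra_simps)

lemma cross3_smult3_self: "cross3 u (smult3 k u) = (0, 0, 0)"
  by (simp add: cross3_smult3_right)

lemma cross3_add3_right: "cross3 z (add3 x y) = add3 (cross3 z x) (cross3 z y)"
  by (cases x rule: prod_cases3, cases y rule: prod_cases3, cases z rule: prod_cases3)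
    (simp add: algebra_simps)

lemma cross3_lincomb_left: "cross3 (lincomb a u b v) w = lincomb a (cross3 u w) b (cross3 v w)"
  unfolding lincomb_def
  by (cases u rule: prod_cases3, cases v rule: prod_cases3, cases w rule: prod_cases3)
    (simp add: algebra_simps)

lemma cross3_lincomb_self:
  "cross3 (lincomb a u b v) v = smult3 a (cross3 u v)"
  "cross3 u (lincomb a u b v) = smult3 b (cross3 u v)"
  unfolding lincomb_def
  by (cases u rule: prod_cases3, cases v rule: prod_cases3, simp add: algebra_simps)+

lemma cross3_lincomb_lincomb:
  "cross3 (lincomb a u b v) (lincomb c u d v) = smult3 (a * d - b * c) (cross3 u v)"
  unfolding lincomb_def
  by (cases u rule: prod_cases3, cases v rule: prod_cases3) (simp add: algebra_simps)

lemma dot3_cross3_self [simp]: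
  "dot3 x (cross3 x y) = 0" "dot3 y (cross3 x y) = 0"
  by (cases x rule: prod_cases3, cases y rule: prod_cases3, simp add: algebra_simps)+

lemma cross3_cross3_left:
  "cross3 (cross3 x y) z = add3 (smult3 (dot3 x z) y) (smult3 (- dot3 y z) x)"
  by (cases x rule: prod_cases3, cases y rule: prod_cases3, cases z rule: prod_cases3)
    (simp add: algebra_simps)

lemma cross3_cross3_common: "cross3 (cross3 z a) (cross3 z b) = smult3 (det3 z a b) z"
  unfolding det3_def
  by (cases z rule: prod_cases3, cases a rule: prod_cases3, cases b rule: prod_cases3)
    (simp add: algebra_simps)

lemma cross3_cross3_common_right: "cross3 (cross3 p n) (cross3 q n) = smult3 (det3 p q n) n"
  unfolding det3_def
  by (cases p rule: prod_cases3, cases q rule: prod_cases3, cases n rule: prod_cases3)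
    (simp add: algebra_simps)

lemma binet_cauchy3: "dot3 (cross3 x y) (cross3 u v) = dot3 x u * dot3 y v - dot3 x v * dot3 y u"
  by (cases x rule: prod_cases3, cases y rule: prod_cases3, cases u rule: prod_cases3,
      cases v rule: prod_cases3) (simp add: algebra_simps)

lemma det3_add3 [simp]:
  "det3 (add3 x y) v w = det3 x v w + det3 y v w"
  "det3 u (add3 x y) w = det3 u x w + det3 u y w"
  "det3 u v (add3 x y) = det3 u v x + det3 u v y"
  unfolding det3_def
  by (cases x rule: prod_cases3, cases y rule: prod_cases3, cases u rule: prod_cases3,
      cases v rule: prod_cases3, cases w rule: prod_cases3, simp add: algebra_simps)+

lemma det3_smult3 [simp]:
  "det3 (smult3 k x) v w = k * det3 x v w"
  "det3 u (smult3 k x) w = k * det3 u x w"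
  "det3 u v (smult3 k x) = k * det3 u v x"
  unfolding det3_def
  by (cases x rule: prod_cases3, cases u rule: prod_cases3, cases v rule: prod_cases3,
      cases w rule: prod_cases3, simp add: algebra_simps)+

lemma det3_repeated [simp]: "det3 x x w = 0" "det3 x v x = 0" "det3 u x x = 0"
  unfolding det3_def
  by (cases x rule: prod_cases3, cases u rule: prod_cases3, cases v rule: prod_cases3,
      cases w rule: prod_cases3, simp add: algebra_simps)+

lemma det3_swap:
  "det3 y x z = - det3 x y z" "det3 x z y = - det3 x y z"
  unfolding det3_def
  by (cases x rule: prod_cases3, cases y rule: prod_cases3, cases z rule: prod_cases3,
      simp add: algebra_simps)+

lemma det3_rotate: "det3 z a b = det3 a b z"
  unfolding det3_def
  by (cases z rule: prod_cases3, cases a rule: prod_cases3, cases b rule: prod_cases3)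
    (simp add: algebra_simps)

lemma det3_as_dot3: "det3 u v w = dot3 w (cross3 u v)"
  unfolding det3_def by (rule dot3_commute)

lemma cramer3:
  "smult3 (det3 u v w) x =
     add3 (add3 (smult3 (det3 x v w) u) (smult3 (det3 u x w) v)) (smult3 (det3 u v x) w)"
  unfolding det3_def
  by (cases x rule: prod_cases3, cases u rule: prod_cases3, cases v rule: prod_cases3,
      cases w rule: prod_cases3) (simp add: algebra_simps)

lemma det3_nonzero_imp_nonzero:
  assumes "det3 a b c \<noteq> 0"
  shows "a \<noteq> (0, 0, 0)" "b \<noteq> (0, 0, 0)" "c \<noteq> (0, 0, 0)"
  using assms by (auto simp: det3_def)

lemma cross3_eq_zero_imp_smult3:
  assumes "u \<noteq> (0, 0, 0)" "cross3 u r = (0, 0, 0)"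
  shows "\<exists>k. r = smult3 k u"
proof -
  obtain u1 u2 u3 where u: "u = (u1, u2, u3)" by (cases u rule: prod_cases3)
  obtain r1 r2 r3 where r: "r = (r1, r2, r3)" by (cases r rule: prod_cases3)
  have e: "u2 * r3 = u3 * r2" "u3 * r1 = u1 * r3" "u1 * r2 = u2 * r1"
    using assms(2) by (auto simp: u r)
  consider "u1 \<noteq> 0" | "u1 = 0" "u2 \<noteq> 0" | "u1 = 0" "u2 = 0" "u3 \<noteq> 0"
    using assms(1) u by blast
  then show ?thesis
  proof cases
    case 1
    then have "r = smult3 (r1 / u1) u" using e by (simp add: u r field_simps mult.commute)
    then show ?thesis ..
  next
    case 2
    then have "r = smult3 (r2 / u2) u" using e by (simp add: u r field_simps mult.commute)
    then show ?thesis ..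
  next
    case 3
    then have "r = smult3 (r3 / u3) u" using e by (simp add: u r field_simps mult.commute)
    then show ?thesis ..
  qed
qed

lemma orthogonal_pair_imp_smult3_cross3:
  assumes "dot3 x r = 0" "dot3 y r = 0" "cross3 x y \<noteq> (0, 0, 0)"
  shows "\<exists>k. r = smult3 k (cross3 x y)"
proof -
  have "cross3 (cross3 x y) r = (0, 0, 0)" using assms by (simp add: cross3_cross3_left)
  then show ?thesis using cross3_eq_zero_imp_smult3 assms(3) by blast
qed

lemma exists_not_orthogonal:
  assumes "c \<noteq> (0, 0, 0)"
  shows "\<exists>w. dot3 c w \<noteq> 0"
  using assms by (cases c rule: prod_cases3)
    (metis dot3_apply mult_1_right mult_zero_right add_0 add_0_right)

lemma exists_orthogonal_pair:
  assumes "L \<noteq> (0, 0, 0)"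
  obtains u v where "dot3 u L = 0" "dot3 v L = 0" "cross3 u v \<noteq> (0, 0, 0)"
proof -
  obtain l1 l2 l3 where L: "L = (l1, l2, l3)" by (cases L rule: prod_cases3)
  consider "l1 \<noteq> 0" | "l1 = 0" "l2 \<noteq> 0" | "l1 = 0" "l2 = 0" "l3 \<noteq> 0"
    using assms L by blast
  then show ?thesis
  proof cases
    case 1
    then show ?thesis
      using that[of "(- l2, l1, 0)" "(- l3, 0, l1)"] by (simp add: L algebra_simps)
  next
    case 2
    then show ?thesis
      using that[of "(l2, - l1, 0)" "(0, - l3, l2)"] by (simp add: L algebra_simps)
  next
    case 3
    then show ?thesis
      using that[of "(l3, 0, - l1)" "(0, l3, - l2)"] by (simp add: L algebra_simps)
  qed
qed

lemma exists_orthogonal_not_parallel: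
  assumes "L \<noteq> (0, 0, 0)" "p \<noteq> (0, 0, 0)"
  obtains x where "dot3 x L = 0" "cross3 p x \<noteq> (0, 0, 0)"
proof -
  obtain u v where uv: "dot3 u L = 0" "dot3 v L = 0" "cross3 u v \<noteq> (0, 0, 0)"
    using exists_orthogonal_pair[OF assms(1)] .
  have "cross3 p u \<noteq> (0, 0, 0) \<or> cross3 p v \<noteq> (0, 0, 0)"
  proof (rule ccontr)
    assume "\<not> ?thesis"
    then obtain k l where "u = smult3 k p" "v = smult3 l p"
      using cross3_eq_zero_imp_smult3[OF assms(2)] by blast
    then show False using uv(3) by (simp add: cross3_smult3_left cross3_smult3_right)
  qed
  then show ?thesis using that uv by blast
qed

lemma lincomb_eq_iff:
  assumes "cross3 u v \<noteq> (0, 0, 0)"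
  shows "lincomb a u b v = lincomb c u d v \<longleftrightarrow> a = c \<and> b = d"
proof
  assume eq: "lincomb a u b v = lincomb c u d v"
  have "smult3 a (cross3 u v) = smult3 c (cross3 u v)"
    using arg_cong[OF eq, of "\<lambda>x. cross3 x v"] by (simp only: cross3_lincomb_self)
  then have "smult3 (a - c) (cross3 u v) = (0, 0, 0)"
    by (cases "cross3 u v" rule: prod_cases3) (simp add: algebra_simps)
  moreover have "smult3 b (cross3 u v) = smult3 d (cross3 u v)"
    using arg_cong[OF eq, of "\<lambda>x. cross3 u x"] by (simp only: cross3_lincomb_self)
  then have "smult3 (b - d) (cross3 u v) = (0, 0, 0)"
    by (cases "cross3 u v" rule: prod_cases3) (simp add: algebra_simps)
  ultimately show "a = c \<and> b = d" using assms by (simp add: smult3_eq_zero_iff)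
qed simp

lemma lincomb_nonzero:
  assumes "cross3 u v \<noteq> (0, 0, 0)" "(a, b) \<noteq> (0, 0)"
  shows "lincomb a u b v \<noteq> (0, 0, 0)"
  using lincomb_eq_iff[OF assms(1), of a b 0 0] assms(2) by (simp add: lincomb_def)

lemma smult3_lincomb: "smult3 k (lincomb a u b v) = lincomb (k * a) u (k * b) v"
  unfolding lincomb_def
  by (cases u rule: prod_cases3, cases v rule: prod_cases3) (simp add: algebra_simps)

lemma lincomb_smult3: "lincomb a (smult3 k u) b (smult3 l v) = lincomb (a * k) u (b * l) v"
  unfolding lincomb_def
  by (cases u rule: prod_cases3, cases v rule: prod_cases3) (simp add: algebra_simps)

lemma lincomb_basis [simp]: "lincomb 1 u 0 v = u" "lincomb 0 u 1 v = v"
  unfolding lincomb_def by simp_all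

lemma det3_zero_imp_lincomb:
  assumes "cross3 u v \<noteq> (0, 0, 0)" "det3 u v y = 0"
  shows "\<exists>a b. y = lincomb a u b v"
proof -
  obtain w where w: "det3 u v w \<noteq> 0"
    using exists_not_orthogonal[OF assms(1)] by (auto simp: det3_def)
  have "smult3 (det3 u v w) y = lincomb (det3 y v w) u (det3 u y w) v"
    using cramer3[of u v w y] assms(2) by (simp add: lincomb_def)
  then have "smult3 (1 / det3 u v w) (smult3 (det3 u v w) y)
      = lincomb (det3 y v w / det3 u v w) u (det3 u y w / det3 u v w) v"
    by (simp add: smult3_lincomb)
  then have "y = lincomb (det3 y v w / det3 u v w) u (det3 u y w / det3 u v w) v"
    using w by simp
  then show ?thesis by blast
qed

section \<open>Points and lines in homogeneous coordinates\<close>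

definition pt :: "'a::field vec3 \<Rightarrow> 'a proj" where
  "pt v = Abs_proj {smult3 c v | c. True}"

lemma rep_in_Rep_proj: "rep P \<noteq> (0, 0, 0) \<and> rep P \<in> Rep_proj P"
proof -
  obtain v where "v \<noteq> (0, 0, 0)" "Rep_proj P = {smult3 c v | c. True}"
    using Rep_proj[of P] by blast
  then have "\<exists>w. w \<noteq> (0, 0, 0) \<and> w \<in> Rep_proj P"
    by (intro exI[of _ v]) (auto intro: exI[of _ 1])
  then show ?thesis unfolding rep_def by (rule someI_ex)
qed

lemma rep_nonzero [simp]: "rep P \<noteq> (0, 0, 0)"
  using rep_in_Rep_proj by blast

lemma smult3_span_eq:
  assumes "k \<noteq> 0"
  shows "{smult3 c (smult3 k v) | c. True} = {smult3 c v | c. True}"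
proof (intro set_eqI iffI)
  fix x assume "x \<in> {smult3 c v | c. True}"
  then obtain c where "x = smult3 (c / k) (smult3 k v)" using assms by auto
  then show "x \<in> {smult3 c (smult3 k v) | c. True}" by blast
qed auto

lemma Rep_pt: "v \<noteq> (0, 0, 0) \<Longrightarrow> Rep_proj (pt v) = {smult3 c v | c. True}"
  unfolding pt_def by (rule Abs_proj_inverse) blast

lemma pt_smult3:
  assumes "k \<noteq> 0"
  shows "pt (smult3 k v) = pt v"
  unfolding pt_def smult3_span_eq[OF assms] ..

lemma rep_pt_smult3:
  assumes "v \<noteq> (0, 0, 0)"
  obtains k where "k \<noteq> 0" "rep (pt v) = smult3 k v"
proof -
  obtain k where k: "rep (pt v) = smult3 k v"
    using rep_in_Rep_proj[of "pt v"] Rep_pt[OF assms] by auto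
  with rep_nonzero[of "pt v"] have "k \<noteq> 0" by auto
  with k that show ?thesis by blast
qed

lemma pt_rep [simp]: "pt (rep P) = P"
proof -
  obtain v where v: "v \<noteq> (0, 0, 0)" "Rep_proj P = {smult3 c v | c. True}"
    using Rep_proj[of P] by blast
  then obtain k where k: "rep P = smult3 k v" using rep_in_Rep_proj[of P] by auto
  with rep_nonzero[of P] have "k \<noteq> 0" by auto
  then have "Rep_proj P = Rep_proj (pt (rep P))"
    using v k Rep_pt[OF v(1)] pt_smult3 by metis
  then show ?thesis using Rep_proj_inject by metis
qed

lemma pt_eq_iff:
  assumes "v \<noteq> (0, 0, 0)" "w \<noteq> (0, 0, 0)"
  shows "pt v = pt w \<longleftrightarrow> cross3 v w = (0, 0, 0)"
proof
  assume "pt v = pt w"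
  then have "w \<in> Rep_proj (pt v)" using Rep_pt[OF assms(2)] by (auto intro: exI[of _ 1])
  then obtain k where "w = smult3 k v" using Rep_pt[OF assms(1)] by auto
  then show "cross3 v w = (0, 0, 0)" by (simp add: cross3_smult3_self)
next
  assume "cross3 v w = (0, 0, 0)"
  then obtain k where k: "w = smult3 k v" using cross3_eq_zero_imp_smult3 assms(1) by blast
  with assms(2) have "k \<noteq> 0" by auto
  then show "pt v = pt w" using k pt_smult3 by metis
qed

lemma pt_eq_if_smult3:
  assumes "smult3 k z = v" "k \<noteq> 0"
  shows "pt z = pt v"
  using pt_smult3[OF assms(2), of z] assms(1) by simp

lemma pt_eq_if_smult3_eq:
  assumes "smult3 D z = smult3 k v" "D \<noteq> 0" "z \<noteq> (0, 0, 0)"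
  shows "pt z = pt v"
proof -
  have "k \<noteq> 0" using assms by (auto simp: smult3_eq_zero_iff)
  then show ?thesis using assms pt_smult3 by metis
qed

lemma incid_pt:
  assumes "v \<noteq> (0, 0, 0)" "w \<noteq> (0, 0, 0)"
  shows "incid (pt v) (pt w) \<longleftrightarrow> dot3 v w = 0"
proof -
  obtain k where "k \<noteq> 0" "rep (pt v) = smult3 k v" using rep_pt_smult3[OF assms(1)] .
  moreover obtain l where "l \<noteq> 0" "rep (pt w) = smult3 l w" using rep_pt_smult3[OF assms(2)] .
  ultimately show ?thesis unfolding incid_def by (simp add: dot3_smult3_left dot3_smult3_right)
qed

lemma incid_commute: "incid P l = incid l P"
  unfolding incid_def by (simp add: dot3_commute)

lemma meet_eq_join: "meet l m = join l m"
  unfolding meet_def join_def by (simp add: incid_commute)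

lemma cross3_rep_nonzero: "X \<noteq> Y \<Longrightarrow> cross3 (rep X) (rep Y) \<noteq> (0, 0, 0)"
  using pt_eq_iff[of "rep X" "rep Y"] by auto

lemma join_pt:
  assumes "cross3 x y \<noteq> (0, 0, 0)"
  shows "join (pt x) (pt y) = pt (cross3 x y)"
  unfolding join_def
proof (rule the_equality)
  have "x \<noteq> (0, 0, 0)" "y \<noteq> (0, 0, 0)" using assms by auto
  then show "incid (pt x) (pt (cross3 x y)) \<and> incid (pt y) (pt (cross3 x y))"
    by (simp add: incid_pt assms)
next
  fix l assume l: "incid (pt x) l \<and> incid (pt y) l"
  have "x \<noteq> (0, 0, 0)" "y \<noteq> (0, 0, 0)" using assms by auto
  then have "dot3 x (rep l) = 0" "dot3 y (rep l) = 0"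
    using l incid_pt[of _ "rep l"] by (metis pt_rep rep_nonzero)+
  then obtain k where k: "rep l = smult3 k (cross3 x y)"
    using orthogonal_pair_imp_smult3_cross3 assms by blast
  then have "k \<noteq> 0" using rep_nonzero[of l] by auto
  then show "l = pt (cross3 x y)" using k pt_smult3 pt_rep by metis
qed

lemma meet_pt: "cross3 x y \<noteq> (0, 0, 0) \<Longrightarrow> meet (pt x) (pt y) = pt (cross3 x y)"
  by (simp add: meet_eq_join join_pt)

lemma join_rep: "X \<noteq> Y \<Longrightarrow> join X Y = pt (cross3 (rep X) (rep Y))"
  using join_pt[OF cross3_rep_nonzero] by (metis pt_rep)

lemma incid_join:
  assumes "X \<noteq> Y"
  shows "incid X (join X Y)" "incid Y (join X Y)"
  using incid_pt[OF rep_nonzero cross3_rep_nonzero[OF assms]] join_rep[OF assms]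
  by (metis dot3_cross3_self pt_rep)+

lemma join_unique:
  assumes "X \<noteq> Y" "incid X l" "incid Y l"
  shows "l = join X Y"
proof -
  have "dot3 (rep X) (rep l) = 0" "dot3 (rep Y) (rep l) = 0"
    using assms by (simp_all add: incid_def)
  then obtain k where k: "rep l = smult3 k (cross3 (rep X) (rep Y))"
    using orthogonal_pair_imp_smult3_cross3 cross3_rep_nonzero[OF assms(1)] by blast
  then have "k \<noteq> 0" using rep_nonzero[of l] by auto
  then show ?thesis using k join_rep[OF assms(1)] pt_smult3 pt_rep by metis
qed

lemma incid_meet:
  assumes "l \<noteq> m"
  shows "incid (meet l m) l" "incid (meet l m) m"
  using incid_join[OF assms] incid_commute meet_eq_join by metis+

lemma meet_unique: "l \<noteq> m \<Longrightarrow> incid P l \<Longrightarrow> incid P m \<Longrightarrow> P = meet l m"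
  by (metis incid_commute join_unique meet_eq_join)

lemma exists_line_through:
  obtains l where "incid X l" "incid Y l"
proof (cases "X = Y")
  case True
  have "pt (1, 0, 0) \<noteq> (pt (0, 1, 0) :: 'a proj)" by (simp add: pt_eq_iff)
  then obtain Z where "Z \<noteq> X" by metis
  then show ?thesis using that incid_join[of X Z] True by blast
next
  case False
  then show ?thesis using that incid_join[of X Y] by blast
qed

lemma incid_join_pt_iff_det3:
  assumes "cross3 u v \<noteq> (0, 0, 0)" "y \<noteq> (0, 0, 0)"
  shows "incid (pt y) (join (pt u) (pt v)) \<longleftrightarrow> det3 u v y = 0"
  using assms by (simp add: join_pt incid_pt det3_as_dot3)

lemma pt_lincomb_eq_iff:
  assumes "cross3 u v \<noteq> (0, 0, 0)" "(a, b) \<noteq> (0, 0)" "(c, d) \<noteq> (0, 0)"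
  shows "pt (lincomb a u b v) = pt (lincomb c u d v) \<longleftrightarrow> a * d - b * c = 0"
  using pt_eq_iff[OF lincomb_nonzero[OF assms(1,2)] lincomb_nonzero[OF assms(1,3)]] assms(1)
  by (simp add: cross3_lincomb_lincomb smult3_eq_zero_iff)

lemma collinear3_pt_iff_det3:
  assumes "x \<noteq> (0, 0, 0)" "y \<noteq> (0, 0, 0)" "z \<noteq> (0, 0, 0)"
  shows "collinear3 (pt x) (pt y) (pt z) \<longleftrightarrow> det3 x y z = 0"
proof
  assume "collinear3 (pt x) (pt y) (pt z)"
  then obtain l where "incid (pt x) l" "incid (pt y) l" "incid (pt z) l"
    unfolding collinear3_def by blast
  then have "dot3 x (rep l) = 0" "dot3 y (rep l) = 0" "dot3 z (rep l) = 0"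
    using assms incid_pt[of _ "rep l"] by (metis pt_rep rep_nonzero)+
  show "det3 x y z = 0"
  proof (cases "cross3 x y = (0, 0, 0)")
    case False
    then obtain k where k: "rep l = smult3 k (cross3 x y)"
      using orthogonal_pair_imp_smult3_cross3 \<open>dot3 x (rep l) = 0\<close> \<open>dot3 y (rep l) = 0\<close> by blast
    then have "k \<noteq> 0" using rep_nonzero[of l] by auto
    then show ?thesis
      using \<open>dot3 z (rep l) = 0\<close> by (simp add: k dot3_smult3_right det3_as_dot3)
  qed (simp add: det3_def)
next
  assume det: "det3 x y z = 0"
  show "collinear3 (pt x) (pt y) (pt z)"
  proof (cases "cross3 x y = (0, 0, 0)")
    case False
    then have "pt x \<noteq> pt y" using pt_eq_iff assms by blast
    then show ?thesis
      using incid_join[of "pt x" "pt y"] incid_join_pt_iff_det3[OF False assms(3)] det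
      unfolding collinear3_def by blast
  next
    case True
    then have "pt x = pt y" using pt_eq_iff assms by blast
    then show ?thesis unfolding collinear3_def using exists_line_through by metis
  qed
qed

lemma det3_rep_nonzero_if_not_collinear:
  "\<not> collinear3 X Y Z \<Longrightarrow> det3 (rep X) (rep Y) (rep Z) \<noteq> 0"
  using collinear3_pt_iff_det3[of "rep X" "rep Y" "rep Z"] by simp

section \<open>Harmonic sets and harmonic reflections in coordinates\<close>

lemma cross_ratio_eq:
  assumes "cross3 (rep A) (rep B) \<noteq> (0, 0, 0)"
    and "rep C = lincomb a (rep A) b (rep B)" "rep D = lincomb c (rep A) d (rep B)"
  shows "cross_ratio A B C D = b * c / (a * d)"
  unfolding cross_ratio_def lincomb_def[symmetric]
proof (rule the_equality)
  show "\<exists>a' b' c' d'. rep C = lincomb a' (rep A) b' (rep B) \<and>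
      rep D = lincomb c' (rep A) d' (rep B) \<and> b * c / (a * d) = b' * c' / (a' * d')"
    using assms(2,3) by blast
next
  fix r assume "\<exists>a' b' c' d'. rep C = lincomb a' (rep A) b' (rep B) \<and>
      rep D = lincomb c' (rep A) d' (rep B) \<and> r = b' * c' / (a' * d')"
  then show "r = b * c / (a * d)" using assms lincomb_eq_iff[OF assms(1)] by metis
qed

lemma cross_ratio_pt_lincomb:
  fixes u v :: "'a::field vec3"
  assumes uv: "cross3 u v \<noteq> (0, 0, 0)" and "(al, be) \<noteq> (0, 0)" "(ga, de) \<noteq> (0, 0)"
  shows "cross_ratio (pt u) (pt v) (pt (lincomb al u be v)) (pt (lincomb ga u de v))
    = be * ga / (al * de)"
proof -
  have nz: "u \<noteq> (0, 0, 0)" "v \<noteq> (0, 0, 0)" using uv by auto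
  then obtain k1 k2 where k12: "k1 \<noteq> 0" "rep (pt u) = smult3 k1 u"
    "k2 \<noteq> 0" "rep (pt v) = smult3 k2 v"
    using rep_pt_smult3 by metis
  obtain k3 where k3: "k3 \<noteq> 0" "rep (pt (lincomb al u be v)) = smult3 k3 (lincomb al u be v)"
    using rep_pt_smult3[OF lincomb_nonzero[OF uv assms(2)]] .
  obtain k4 where k4: "k4 \<noteq> 0" "rep (pt (lincomb ga u de v)) = smult3 k4 (lincomb ga u de v)"
    using rep_pt_smult3[OF lincomb_nonzero[OF uv assms(3)]] .
  have in_frame: "smult3 k (lincomb a u b v)
      = lincomb (k * a / k1) (rep (pt u)) (k * b / k2) (rep (pt v))" for k a b
    using k12 by (simp add: smult3_lincomb lincomb_smult3)
  have "cross3 (rep (pt u)) (rep (pt v)) \<noteq> (0, 0, 0)"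
    using uv nz pt_eq_iff[of u v] cross3_rep_nonzero[of "pt u" "pt v"] by auto
  then have "cross_ratio (pt u) (pt v) (pt (lincomb al u be v)) (pt (lincomb ga u de v))
      = (k3 * be / k2) * (k4 * ga / k1) / ((k3 * al / k1) * (k4 * de / k2))"
    by (rule cross_ratio_eq) (simp_all only: k3 k4 in_frame)
  also have "\<dots> = be * ga / (al * de)"
    using k12 k3 k4 by (cases "al * de = 0") (auto simp: field_simps)
  finally show ?thesis .
qed

lemma distinct_pt_lincomb_harmonic:
  fixes u v :: "'a::field vec3"
  assumes two: "(2::'a) \<noteq> 0" and uv: "cross3 u v \<noteq> (0, 0, 0)"
    and h: "al * de \<noteq> 0" "be * ga = - (al * de)"
  shows "distinct [pt u, pt v, pt (lincomb al u be v), pt (lincomb ga u de v)]"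
proof -
  have ne: "pt (lincomb a u b v) \<noteq> pt (lincomb c u d v)"
    if "(a, b) \<noteq> (0, 0)" "(c, d) \<noteq> (0, 0)" "a * d - b * c \<noteq> 0" for a b c d :: 'a
    using pt_lincomb_eq_iff[OF uv that(1,2)] that(3) by blast
  have nz: "(1::'a, 0::'a) \<noteq> (0, 0)" "(0::'a, 1::'a) \<noteq> (0, 0)"
    "(al, be) \<noteq> (0, 0)" "(ga, de) \<noteq> (0, 0)" using h by auto
  have "be \<noteq> 0" "ga \<noteq> 0" using h by auto
  moreover have "al * de - be * ga \<noteq> 0" using h two by (simp add: mult_2[symmetric])
  ultimately show ?thesis
    using ne[OF nz(1,2)] ne[OF nz(1,3)] ne[OF nz(1,4)] ne[OF nz(2,3)] ne[OF nz(2,4)]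
      ne[OF nz(3,4)] h
    by auto
qed

lemma harmonic_set_pt_lincomb_iff:
  fixes u v :: "'a::field vec3"
  assumes two: "(2::'a) \<noteq> 0" and uv: "cross3 u v \<noteq> (0, 0, 0)"
    and ab: "(al, be) \<noteq> (0, 0)" and cd: "(ga, de) \<noteq> (0, 0)"
  shows "harmonic_set (pt u) (pt v) (pt (lincomb al u be v)) (pt (lincomb ga u de v))
    \<longleftrightarrow> al * de \<noteq> 0 \<and> be * ga = - (al * de)"
proof
  assume "harmonic_set (pt u) (pt v) (pt (lincomb al u be v)) (pt (lincomb ga u de v))"
  then have "be * ga / (al * de) = -1"
    unfolding harmonic_set_def using cross_ratio_pt_lincomb[OF uv ab cd] by simp
  then show "al * de \<noteq> 0 \<and> be * ga = - (al * de)"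
    by (cases "al * de = 0") (simp_all add: field_simps)
next
  assume h: "al * de \<noteq> 0 \<and> be * ga = - (al * de)"
  have "u \<noteq> (0, 0, 0)" "v \<noteq> (0, 0, 0)" using uv by auto
  then have "collinear4 (pt u) (pt v) (pt (lincomb al u be v)) (pt (lincomb ga u de v))"
    unfolding collinear4_def using uv lincomb_nonzero[OF uv ab] lincomb_nonzero[OF uv cd]
    by (intro exI[of _ "pt (cross3 u v)"]) (simp add: incid_pt dot3_lincomb_left)
  then show "harmonic_set (pt u) (pt v) (pt (lincomb al u be v)) (pt (lincomb ga u de v))"
    unfolding harmonic_set_def
    using distinct_pt_lincomb_harmonic[OF two uv h[THEN conjunct1] h[THEN conjunct2]]
      cross_ratio_pt_lincomb[OF uv ab cd] h
    by simp
qed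

text \<open>The line \<open>pt n\<close> cuts the line \<open>pt x\<close> in \<open>pt (cross3 x n)\<close>, and \<open>cross3 _ n\<close> is
  linear, so a section of a pencil inherits the coefficients \<open>al, be, ga, de\<close>.\<close>
lemma harmonic_set_section_iff:
  fixes p q :: "'a::field vec3"
  assumes two: "(2::'a) \<noteq> 0" and n: "det3 p q n \<noteq> 0"
    and ab: "(al, be) \<noteq> (0, 0)" and cd: "(ga, de) \<noteq> (0, 0)"
  shows "harmonic_set (meet (pt p) (pt n)) (meet (pt q) (pt n))
      (meet (pt (lincomb al p be q)) (pt n)) (meet (pt (lincomb ga p de q)) (pt n))
    \<longleftrightarrow> al * de \<noteq> 0 \<and> be * ga = - (al * de)"
proof -
  have cc: "cross3 (cross3 p n) (cross3 q n) \<noteq> (0, 0, 0)"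
    using n det3_nonzero_imp_nonzero(3)[OF n]
    by (simp add: cross3_cross3_common_right smult3_eq_zero_iff)
  then have "cross3 p n \<noteq> (0, 0, 0)" "cross3 q n \<noteq> (0, 0, 0)"
    "cross3 (lincomb al p be q) n \<noteq> (0, 0, 0)" "cross3 (lincomb ga p de q) n \<noteq> (0, 0, 0)"
    using lincomb_nonzero[OF cc ab] lincomb_nonzero[OF cc cd] by (auto simp: cross3_lincomb_left)
  then show ?thesis
    using harmonic_set_pt_lincomb_iff[OF two cc ab cd] by (simp add: meet_pt cross3_lincomb_left)
qed

lemma harmonic_pencil_pt_lincomb_iff:
  fixes p q :: "'a::field vec3"
  assumes two: "(2::'a) \<noteq> 0" and pq: "cross3 p q \<noteq> (0, 0, 0)"
    and ab: "(al, be) \<noteq> (0, 0)" and cd: "(ga, de) \<noteq> (0, 0)"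
  shows "harmonic_pencil (pt p) (pt q) (pt (lincomb al p be q)) (pt (lincomb ga p de q))
    \<longleftrightarrow> al * de \<noteq> 0 \<and> be * ga = - (al * de)"
proof -
  note section_harmonic_iff = harmonic_set_section_iff[OF two _ ab cd]
  have p: "p \<noteq> (0, 0, 0)" and q: "q \<noteq> (0, 0, 0)" using pq by auto
  show ?thesis
  proof
    assume "harmonic_pencil (pt p) (pt q) (pt (lincomb al p be q)) (pt (lincomb ga p de q))"
    then obtain Z m where d: "pt p \<noteq> pt q" and Z: "incid Z (pt p)" "incid Z (pt q)"
      and m: "\<not> incid Z m" and hs: "harmonic_set (meet (pt p) m) (meet (pt q) m)
          (meet (pt (lincomb al p be q)) m) (meet (pt (lincomb ga p de q)) m)"
      unfolding harmonic_pencil_def by auto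
    have "Z = pt (cross3 p q)" using meet_unique[OF d Z] meet_pt[OF pq] by simp
    then have "det3 p q (rep m) \<noteq> 0"
      using m incid_pt[OF pq rep_nonzero] by (simp add: det3_def)
    then show "al * de \<noteq> 0 \<and> be * ga = - (al * de)"
      using section_harmonic_iff hs by (metis pt_rep)
  next
    assume h: "al * de \<noteq> 0 \<and> be * ga = - (al * de)"
    obtain n where n: "det3 p q n \<noteq> 0"
      using exists_not_orthogonal[OF pq] by (auto simp: det3_def)
    then have "n \<noteq> (0, 0, 0)" by (metis det3_nonzero_imp_nonzero(3))
    then have "incid (pt (cross3 p q)) (pt p)" "incid (pt (cross3 p q)) (pt q)"
      "incid (pt (cross3 p q)) (pt (lincomb al p be q))"
      "incid (pt (cross3 p q)) (pt (lincomb ga p de q))" "\<not> incid (pt (cross3 p q)) (pt n)"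
      using n by (simp_all add: incid_pt pq p q lincomb_nonzero[OF pq ab] lincomb_nonzero[OF pq cd]
          dot3_lincomb_right det3_def dot3_commute[of "cross3 p q"])
    then show "harmonic_pencil (pt p) (pt q) (pt (lincomb al p be q)) (pt (lincomb ga p de q))"
      unfolding harmonic_pencil_def
      using distinct_pt_lincomb_harmonic[OF two pq h[THEN conjunct1] h[THEN conjunct2]] h
        section_harmonic_iff[OF n] by blast
  qed
qed

lemma harm_conj_pt_lincomb:
  fixes u v :: "'a::field vec3"
  assumes two: "(2::'a) \<noteq> 0" and uv: "cross3 u v \<noteq> (0, 0, 0)" and "a \<noteq> 0" "b \<noteq> 0"
  shows "harm_conj (pt u) (pt v) (pt (lincomb a u b v)) = pt (lincomb a u (- b) v)"
  unfolding harm_conj_def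
proof (rule the_equality)
  show "harmonic_set (pt u) (pt v) (pt (lincomb a u b v)) (pt (lincomb a u (- b) v))"
    using harmonic_set_pt_lincomb_iff[OF two uv] assms by simp
next
  fix Y assume hY: "harmonic_set (pt u) (pt v) (pt (lincomb a u b v)) Y"
  then obtain l where l: "incid (pt u) l" "incid (pt v) l" "incid Y l"
    unfolding harmonic_set_def collinear4_def by blast
  have "u \<noteq> (0, 0, 0)" "v \<noteq> (0, 0, 0)" using uv by auto
  then have "pt u \<noteq> pt v" using pt_eq_iff uv by blast
  then have "incid (pt (rep Y)) (join (pt u) (pt v))" using join_unique l by force
  then obtain c d where y: "rep Y = lincomb c u d v"
    using det3_zero_imp_lincomb[OF uv] incid_join_pt_iff_det3[OF uv rep_nonzero] by metis
  then have "(c, d) \<noteq> (0, 0)" using rep_nonzero[of Y] by (auto simp: lincomb_def)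
  moreover have Y: "Y = pt (lincomb c u d v)" using y by (metis pt_rep)
  ultimately have "a * d \<noteq> 0" "b * c = - (a * d)"
    using hY harmonic_set_pt_lincomb_iff[OF two uv] assms by simp_all
  moreover have "c = - d / b * a" using \<open>b * c = - (a * d)\<close> \<open>b \<noteq> 0\<close> by (simp add: field_simps)
  ultimately have "lincomb c u d v = smult3 (- d / b) (lincomb a u (- b) v)"
    using assms by (simp add: smult3_lincomb)
  then show "Y = pt (lincomb a u (- b) v)"
    using Y \<open>a * d \<noteq> 0\<close> assms by (simp add: pt_smult3)
qed

text \<open>The line \<open>C \<or> Q\<close> meets the axis in \<open>m = (c \<cdot> L) w - (w \<cdot> L) c\<close>; in the basis
  \<open>w, m\<close> the point \<open>C\<close> is \<open>-(c \<cdot> L) w + m\<close>, so its harmonic conjugate is \<open>(c \<cdot> L) w + m\<close>.\<close>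
lemma harm_refl_pt:
  fixes w c L :: "'a::field vec3"
  assumes two: "(2::'a) \<noteq> 0"
    and wL: "dot3 w L \<noteq> 0" and cL: "dot3 c L \<noteq> 0" and cw: "cross3 c w \<noteq> (0, 0, 0)"
  shows "harm_refl (pt w) (pt L) (pt c) = pt (lincomb (2 * dot3 c L) w (- dot3 w L) c)"
proof -
  define al where "al = dot3 c L"
  define be where "be = dot3 w L"
  define m where "m = lincomb al w (- be) c"
  have nz: "w \<noteq> (0, 0, 0)" "c \<noteq> (0, 0, 0)" "L \<noteq> (0, 0, 0)" using wL cL by auto
  have wc: "cross3 w c \<noteq> (0, 0, 0)"
    using cw cross3_commute[of c w] by (auto simp: smult3_eq_zero_iff)
  have wm: "cross3 w m \<noteq> (0, 0, 0)"
    using wc wL by (simp add: m_def cross3_lincomb_self be_def smult3_eq_zero_iff)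
  have "cross3 (cross3 c w) L = m"
    by (simp add: m_def al_def be_def lincomb_def cross3_cross3_left)
  moreover have "m \<noteq> (0, 0, 0)" using wm by auto
  ultimately have M: "meet (join (pt c) (pt w)) (pt L) = pt m"
    using cw by (simp add: join_pt meet_pt)
  have "smult3 (- be) c = lincomb (- al) w 1 m"
    unfolding m_def lincomb_def by (cases w rule: prod_cases3, cases c rule: prod_cases3) simp
  then have C: "pt c = pt (lincomb (- al) w 1 m)"
    using wL by (intro pt_eq_if_smult3[of "- be"]) (simp_all add: be_def)
  have "harm_conj (pt w) (pt m) (pt c) = pt (lincomb (- al) w (- 1) m)"
    using harm_conj_pt_lincomb[OF two wm, of "- al" 1] cL C by (simp add: al_def)
  also have "\<dots> = pt (lincomb (2 * al) w (- be) c)"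
  proof (rule pt_eq_if_smult3)
    show "smult3 (- 1) (lincomb (- al) w (- 1) m) = lincomb (2 * al) w (- be) c"
      unfolding m_def lincomb_def by (cases w rule: prod_cases3, cases c rule: prod_cases3) simp
  qed simp
  finally have "harm_conj (pt w) (pt m) (pt c) = pt (lincomb (2 * al) w (- be) c)" .
  moreover have "pt c \<noteq> pt w" "\<not> incid (pt c) (pt L)"
    using pt_eq_iff[OF nz(2,1)] cw incid_pt[OF nz(2,3)] cL by auto
  ultimately show ?thesis using M by (simp add: harm_refl_def al_def be_def)
qed

section \<open>Symmetric bilinear forms\<close>

locale symmetric_bilinear =
  fixes B :: "'a::field vec3 \<Rightarrow> 'a vec3 \<Rightarrow> 'a"
  assumes commute: "B x y = B y x"
    and add_left: "B (add3 x y) z = B x z + B y z"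
    and smult_left: "B (smult3 k x) z = k * B x z"
begin

lemma add_right: "B z (add3 x y) = B z x + B z y"
  by (simp add: commute[of z] add_left)

lemma smult_right: "B z (smult3 k x) = k * B z x"
  by (simp add: commute[of z] smult_left)

lemma lincomb_left: "B (lincomb a u b v) w = a * B u w + b * B v w"
  by (simp add: lincomb_def add_left smult_left)

lemma lincomb_right: "B w (lincomb a u b v) = a * B w u + b * B w v"
  by (simp add: lincomb_def add_right smult_right)

lemmas bilinear = add_left add_right smult_left smult_right

definition polar_vector :: "'a vec3 \<Rightarrow> 'a vec3" where
  "polar_vector x = (B x (1, 0, 0), B x (0, 1, 0), B x (0, 0, 1))"

lemma dot3_polar_vector: "dot3 y (polar_vector x) = B x y"
proof -
  obtain y1 y2 y3 where y: "y = (y1, y2, y3)" by (cases y rule: prod_cases3)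
  have "y = add3 (add3 (smult3 y1 (1, 0, 0)) (smult3 y2 (0, 1, 0))) (smult3 y3 (0, 0, 1))"
    by (simp add: y)
  then have "B x y = y1 * B x (1, 0, 0) + y2 * B x (0, 1, 0) + y3 * B x (0, 0, 1)"
    by (metis add_right smult_right)
  then show ?thesis by (simp add: y polar_vector_def)
qed

lemma polar_vector_smult3: "polar_vector (smult3 k u) = smult3 k (polar_vector u)"
  by (simp add: polar_vector_def smult_left)

lemma conic_frame_equation:
  assumes "B a a = 0" "B b b = 0" "B c c = 0"
  shows "(det3 a b c)\<^sup>2 * B z z = 2 * (B a b * det3 z b c * det3 a z c
    + B a c * det3 z b c * det3 a b z + B b c * det3 a z c * det3 a b z)"
proof -
  have "(det3 a b c)\<^sup>2 * B z z = B (smult3 (det3 a b c) z) (smult3 (det3 a b c) z)"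
    by (simp add: bilinear power2_eq_square)
  also have "\<dots> = 2 * (B a b * det3 z b c * det3 a z c
      + B a c * det3 z b c * det3 a b z + B b c * det3 a z c * det3 a b z)"
    unfolding cramer3[of a b c z]
    by (simp add: bilinear commute[of b a] commute[of c a] commute[of c b] assms algebra_simps)
  finally show ?thesis .
qed

text \<open>By \<open>harm_refl_pt\<close>, \<open>d\<close> represents the image of \<open>c\<close> under the harmonic reflection
  in the pole \<open>w\<close> of the line \<open>L\<close> and in \<open>L\<close> itself.\<close>
lemma reflection_in_pole_scales_form:
  fixes w c L :: "'a vec3"
  assumes "polar_vector w = smult3 k L"
  defines "d \<equiv> lincomb (2 * dot3 c L) w (- dot3 w L) c"
  shows "B d d = (dot3 w L)\<^sup>2 * B c c"
proof -
  have Bw: "B w x = k * dot3 x L" for x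
    using dot3_polar_vector[of x w] assms(1) by (simp add: dot3_smult3_right)
  show ?thesis
    unfolding d_def by (simp add: lincomb_left lincomb_right commute[of c w] Bw power2_eq_square
        algebra_simps)
qed

lemma dot3_cross3_polar_vectors:
  "dot3 (cross3 (polar_vector a) (polar_vector b)) (cross3 a b) = B a a * B b b - (B a b)\<^sup>2"
  by (simp add: binet_cauchy3 dot3_commute[of "polar_vector _"] dot3_polar_vector
      commute[of b a] power2_eq_square)

lemma polar_vector_pole:
  assumes "cross3 a b \<noteq> (0, 0, 0)"
  obtains k where "polar_vector (cross3 (polar_vector a) (polar_vector b)) = smult3 k (cross3 a b)"
proof -
  have "dot3 x (polar_vector (cross3 (polar_vector a) (polar_vector b)))
      = dot3 (cross3 (polar_vector a) (polar_vector b)) (polar_vector x)" for x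
    by (simp add: dot3_polar_vector commute)
  then have "dot3 a (polar_vector (cross3 (polar_vector a) (polar_vector b))) = 0"
    "dot3 b (polar_vector (cross3 (polar_vector a) (polar_vector b))) = 0"
    by (simp_all add: dot3_commute[of "cross3 _ _"])
  then show ?thesis using that orthogonal_pair_imp_smult3_cross3[OF _ _ assms] by blast
qed

lemma frame_vertex_sum:
  assumes "B a a = 0" "B b b = 0" "B c c = 0"
  shows "B (add3 (add3 a b) c) (add3 (add3 a b) c) = 2 * (B a b + B a c + B b c)"
  by (simp add: bilinear assms commute[of b a] commute[of c a] commute[of c b] algebra_simps)

lemma frame_test_point_form:
  fixes t :: 'a
  assumes "B a a = 0" "B b b = 0" "B c c = 0" "B a b + B a c + B b c = 0"
  defines "z \<equiv> add3 (add3 (smult3 (1 + t) a) (smult3 (t * (1 + t)) b)) (smult3 (2 * t) c)"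
  shows "B z z = 2 * t * (1 + t) * ((B b c - B a c) * (t - 1))"
proof -
  have la: "B a b = - (B a c + B b c)" using assms(4) by (metis add.assoc add_eq_0_iff2)
  have "B z z = 2 * ((1 + t) * (t * (1 + t)) * B a b + (1 + t) * (2 * t) * B a c
      + (t * (1 + t)) * (2 * t) * B b c)"
    unfolding z_def using assms(1-3)
    by (simp add: bilinear commute[of b a] commute[of c a] commute[of c b] algebra_simps)
  also have "\<dots> = 2 * t * (1 + t) * ((B b c - B a c) * (t - 1))"
    unfolding la by (simp add: algebra_simps)
  finally show ?thesis .
qed

end

locale nondegenerate_form = symmetric_bilinear +
  assumes nondegenerate: "x \<noteq> (0, 0, 0) \<Longrightarrow> \<exists>y. B x y \<noteq> 0"
begin

lemma polar_vector_nonzero: "x \<noteq> (0, 0, 0) \<Longrightarrow> polar_vector x \<noteq> (0, 0, 0)"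
  using nondegenerate dot3_polar_vector by (metis dot3_zero_right)

end

section \<open>Harmonic curves are conics\<close>

text \<open>The fourth vertex fixes the scaling of the representatives of the first three.\<close>
lemma quadrangle_standard_frame:
  assumes "general_position A C B D"
  obtains a b c where "det3 a b c \<noteq> 0" "A = pt a" "B = pt b" "C = pt c"
    "D = pt (add3 (add3 a b) c)"
proof -
  define a0 b0 c0 d0 where "a0 = rep A" "b0 = rep B" "c0 = rep C" "d0 = rep D"
  have "\<not> collinear3 A B C" "\<not> collinear3 D B C" "\<not> collinear3 A D C" "\<not> collinear3 A B D"
    using assms unfolding general_position_def collinear3_def by blast+
  then have dets: "det3 a0 b0 c0 \<noteq> 0" "det3 d0 b0 c0 \<noteq> 0" "det3 a0 d0 c0 \<noteq> 0" "det3 a0 b0 d0 \<noteq> 0"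
    unfolding a0_b0_c0_d0_def by (simp_all add: det3_rep_nonzero_if_not_collinear)
  define D0 where "D0 = det3 a0 b0 c0"
  define a b c where "a = smult3 (det3 d0 b0 c0 / D0) a0" "b = smult3 (det3 a0 d0 c0 / D0) b0"
    "c = smult3 (det3 a0 b0 d0 / D0) c0"
  have "smult3 D0 d0 = add3 (add3 (smult3 (det3 d0 b0 c0) a0) (smult3 (det3 a0 d0 c0) b0))
      (smult3 (det3 a0 b0 d0) c0)"
    unfolding D0_def by (rule cramer3)
  also have "\<dots> = smult3 D0 (add3 (add3 a b) c)"
    using dets unfolding a_b_c_def D0_def
    by (cases a0 rule: prod_cases3, cases b0 rule: prod_cases3, cases c0 rule: prod_cases3)
      (simp add: distrib_left)
  finally have "D = pt (add3 (add3 a b) c)"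
    using dets smult3_cancel_left[of D0] by (metis D0_def a0_b0_c0_d0_def(4) pt_rep)
  moreover have "det3 a b c \<noteq> 0" using dets unfolding a_b_c_def D0_def by simp
  moreover have "A = pt a" "B = pt b" "C = pt c"
    using dets by (simp_all add: a_b_c_def D0_def a0_b0_c0_d0_def pt_smult3)
  ultimately show ?thesis using that by blast
qed

text \<open>In the frame \<open>a, b, c\<close>, a point \<open>z\<close> has the coordinates \<open>k1 = det3 z b c\<close>,
  \<open>k2 = det3 a z c\<close>, \<open>k3 = det3 a b z\<close> (up to the factor \<open>det3 a b c\<close>, by Cramer's rule).
  The harmonic curve of the frame quadrangle turns out to be the conic
  \<open>2 k1 k2 - k1 k3 - k2 k3 = 0\<close>; this is the polarization of its equation.\<close>
definition harmonic_bilinear ::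
    "'a::field vec3 \<Rightarrow> 'a vec3 \<Rightarrow> 'a vec3 \<Rightarrow> 'a vec3 \<Rightarrow> 'a vec3 \<Rightarrow> 'a" where
  "harmonic_bilinear a b c x y =
     2 * (det3 x b c * det3 a y c + det3 a x c * det3 y b c)
     - (det3 x b c * det3 a b y + det3 a b x * det3 y b c)
     - (det3 a x c * det3 a b y + det3 a b x * det3 a y c)"

lemma harmonic_bilinear_diag:
  "harmonic_bilinear a b c z z
    = 2 * (2 * det3 z b c * det3 a z c - det3 a b z * det3 z b c - det3 a b z * det3 a z c)"
  unfolding harmonic_bilinear_def by (simp add: algebra_simps)

lemma symmetric_bilinear_harmonic_bilinear: "symmetric_bilinear (harmonic_bilinear a b c)"
  by unfold_locales (simp_all add: harmonic_bilinear_def algebra_simps)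

lemma nondegenerate_harmonic_bilinear:
  fixes a b c :: "'a::field vec3"
  assumes two: "(2::'a) \<noteq> 0" and D: "det3 a b c \<noteq> 0"
  shows "nondegenerate_form (harmonic_bilinear a b c)"
proof (intro nondegenerate_form.intro symmetric_bilinear_harmonic_bilinear
    nondegenerate_form_axioms.intro)
  fix x :: "'a vec3"
  assume x: "x \<noteq> (0, 0, 0)"
  define K1 K2 K3 where "K1 = det3 x b c" "K2 = det3 a x c" "K3 = det3 a b x"
  show "\<exists>y. harmonic_bilinear a b c x y \<noteq> 0"
  proof (rule ccontr)
    assume "\<nexists>y. harmonic_bilinear a b c x y \<noteq> 0"
    then have h: "harmonic_bilinear a b c x a = 0" "harmonic_bilinear a b c x b = 0"
      "harmonic_bilinear a b c x c = 0" by blast+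
    have "(2 * K2 - K3) * det3 a b c = 0"
      using h(1) unfolding harmonic_bilinear_def K1_K2_K3_def
      by (simp add: algebra_simps det3_swap(1)[of a b c] det3_swap(2)[of b a c])
    moreover have "(2 * K1 - K3) * det3 a b c = 0"
      using h(2) unfolding harmonic_bilinear_def K1_K2_K3_def
      by (simp add: algebra_simps det3_swap(1)[of b a c] det3_swap(2)[of a c b])
    moreover have "(K1 + K2) * det3 a b c = 0"
      using h(3) unfolding harmonic_bilinear_def K1_K2_K3_def
      by (simp add: algebra_simps det3_swap(1)[of c b a] det3_swap(2)[of c a b]
          det3_swap(1)[of a c b] neg_eq_iff_add_eq_0)
    ultimately have "2 * K2 = K3" "2 * K1 = K3" "K1 + K2 = 0" using D by auto
    then have "K1 = 0" "K2 = 0" "K3 = 0" using two by (auto simp: mult_2[symmetric])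
    then have "smult3 (det3 a b c) x = (0, 0, 0)"
      using cramer3[of a b c x] by (simp add: K1_K2_K3_def)
    then show False using D x by (simp add: smult3_eq_zero_iff)
  qed
qed

lemma frame_coordinates_nonvertex:
  fixes a b c z :: "'a::field vec3"
  assumes D: "det3 a b c \<noteq> 0" and z: "z \<noteq> (0, 0, 0)"
    and nv: "pt z \<notin> {pt a, pt b, pt c, pt (add3 (add3 a b) c)}"
  defines "k1 \<equiv> det3 z b c" and "k2 \<equiv> det3 a z c" and "k3 \<equiv> det3 a b z"
  shows "(k2, k3) \<noteq> (0, 0)" "(k1, k3) \<noteq> (0, 0)" "(k1, k2) \<noteq> (0, 0)"
    "\<not> (k1 = k3 \<and> k2 = k3)"
proof -
  have cr: "smult3 (det3 a b c) z = add3 (add3 (smult3 k1 a) (smult3 k2 b)) (smult3 k3 c)"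
    unfolding k1_def k2_def k3_def by (rule cramer3)
  show "(k2, k3) \<noteq> (0, 0)" "(k1, k3) \<noteq> (0, 0)" "(k1, k2) \<noteq> (0, 0)"
    using cr nv pt_eq_if_smult3_eq[OF _ D z, of k1 a] pt_eq_if_smult3_eq[OF _ D z, of k2 b]
      pt_eq_if_smult3_eq[OF _ D z, of k3 c] by auto
  have "add3 (add3 (smult3 k a) (smult3 k b)) (smult3 k c) = smult3 k (add3 (add3 a b) c)" for k
    by (cases a rule: prod_cases3, cases b rule: prod_cases3, cases c rule: prod_cases3)
      (simp add: algebra_simps)
  then show "\<not> (k1 = k3 \<and> k2 = k3)"
    using cr nv pt_eq_if_smult3_eq[OF _ D z, of k3 "add3 (add3 a b) c"] by auto
qed

lemma cross3_frame_vertices: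
  fixes a b c z :: "'a::field vec3"
  defines "k1 \<equiv> det3 z b c" and "k2 \<equiv> det3 a z c" and "k3 \<equiv> det3 a b z"
  shows "smult3 k3 (cross3 z c) = lincomb (- k1) (cross3 z a) (- k2) (cross3 z b)"
    and "smult3 k3 (cross3 z (add3 (add3 a b) c))
      = lincomb (k3 - k1) (cross3 z a) (k3 - k2) (cross3 z b)"
proof -
  have "cross3 z (smult3 (det3 a b c) z) = (0, 0, 0)" by (simp add: cross3_smult3_right)
  then have "add3 (add3 (smult3 k1 (cross3 z a)) (smult3 k2 (cross3 z b))) (smult3 k3 (cross3 z c))
      = (0, 0, 0)"
    unfolding cramer3[of a b c z] k1_def k2_def k3_def
    by (simp add: cross3_add3_right cross3_smult3_right)
  then show c: "smult3 k3 (cross3 z c) = lincomb (- k1) (cross3 z a) (- k2) (cross3 z b)"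
    unfolding lincomb_def
    by (cases "cross3 z a" rule: prod_cases3, cases "cross3 z b" rule: prod_cases3,
        cases "cross3 z c" rule: prod_cases3) (auto simp: algebra_simps eq_neg_iff_add_eq_0)
  have "cross3 z (add3 (add3 a b) c) = add3 (add3 (cross3 z a) (cross3 z b)) (cross3 z c)"
    by (simp add: cross3_add3_right)
  then show "smult3 k3 (cross3 z (add3 (add3 a b) c))
      = lincomb (k3 - k1) (cross3 z a) (k3 - k2) (cross3 z b)"
    using c unfolding lincomb_def
    by (cases "cross3 z a" rule: prod_cases3, cases "cross3 z b" rule: prod_cases3,
        cases "cross3 z c" rule: prod_cases3) (auto simp: algebra_simps)
qed

lemma harmonic_frame_coefficients_iff:
  fixes k1 k2 k3 :: "'a::field"
  assumes k3: "k3 \<noteq> 0" and "(k1, k2) \<noteq> (0, 0)" and "\<not> (k1 = k3 \<and> k2 = k3)"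
  shows "(- k1) * (k3 - k2) \<noteq> 0 \<and> (- k2) * (k3 - k1) = - ((- k1) * (k3 - k2))
    \<longleftrightarrow> 2 * k1 * k2 - k3 * k1 - k3 * k2 = 0"
proof -
  have sum: "(- k2) * (k3 - k1) + (- k1) * (k3 - k2) = 2 * k1 * k2 - k3 * k1 - k3 * k2"
    by (simp add: algebra_simps)
  have "k1 \<noteq> 0 \<and> k3 - k2 \<noteq> 0" if eq: "2 * k1 * k2 - k3 * k1 - k3 * k2 = 0"
  proof
    show "k1 \<noteq> 0"
    proof
      assume "k1 = 0"
      with eq k3 have "k2 = 0" by simp
      with \<open>k1 = 0\<close> assms(2) show False by simp
    qed
    show "k3 - k2 \<noteq> 0"
    proof
      assume "k3 - k2 = 0"
      with eq have "k2 * (k1 - k2) = 0" by (simp add: algebra_simps)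
      with \<open>k3 - k2 = 0\<close> k3 assms(3) show False by simp
    qed
  qed
  then show ?thesis using sum by (auto simp: eq_neg_iff_add_eq_0)
qed

text \<open>Seen from a point \<open>z\<close> off the frame, the lines to the vertices are
  \<open>p = z \<times> a\<close>, \<open>q = z \<times> b\<close> and (after scaling by \<open>k3\<close>) \<open>-k1 p - k2 q\<close> and
  \<open>(k3 - k1) p + (k3 - k2) q\<close>, whose harmonicity is the equation of the curve.\<close>
lemma harmonic_pencil_frame_iff:
  fixes a b c z :: "'a::field vec3"
  assumes two: "(2::'a) \<noteq> 0" and D: "det3 a b c \<noteq> 0" and z: "z \<noteq> (0, 0, 0)"
    and nv: "pt z \<notin> {pt a, pt b, pt c, pt (add3 (add3 a b) c)}"
  shows "harmonic_pencil (join (pt z) (pt a)) (join (pt z) (pt b)) (join (pt z) (pt c))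
      (join (pt z) (pt (add3 (add3 a b) c)))
    \<longleftrightarrow> harmonic_bilinear a b c z z = 0"
proof -
  define d where "d = add3 (add3 a b) c"
  define k1 k2 k3 where "k1 = det3 z b c" "k2 = det3 a z c" "k3 = det3 a b z"
  define p q where "p = cross3 z a" "q = cross3 z b"
  note nonvertex = frame_coordinates_nonvertex[OF D z nv, folded k1_k2_k3_def]
  have "det3 a b d \<noteq> 0" using D by (simp add: d_def)
  then have nz: "a \<noteq> (0, 0, 0)" "b \<noteq> (0, 0, 0)" "c \<noteq> (0, 0, 0)" "d \<noteq> (0, 0, 0)"
    using D by (auto dest: det3_nonzero_imp_nonzero)
  then have cz: "cross3 z x \<noteq> (0, 0, 0)" if "x \<in> {a, b, c, d}" for x
    using that nv pt_eq_iff[OF z] by (auto simp: d_def)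
  then have joins: "join (pt z) (pt x) = pt (cross3 z x)" if "x \<in> {a, b, c, d}" for x
    using that join_pt by blast
  have "harmonic_bilinear a b c z z = 2 * (2 * k1 * k2 - k3 * k1 - k3 * k2)"
    by (simp add: harmonic_bilinear_diag k1_k2_k3_def)
  then have form: "harmonic_bilinear a b c z z = 0 \<longleftrightarrow> 2 * k1 * k2 - k3 * k1 - k3 * k2 = 0"
    using two by (metis mult_eq_0_iff)
  have pq: "cross3 p q = smult3 k3 z"
    by (simp add: p_q_def k1_k2_k3_def cross3_cross3_common det3_rotate)
  show ?thesis
  proof (cases "k3 = 0")
    case True
    then have "pt p = pt q" using pt_eq_iff[OF cz[of a] cz[of b]] pq by (simp add: p_q_def)
    moreover have "join (pt z) (pt a) = pt p" "join (pt z) (pt b) = pt q"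
      unfolding p_q_def by (rule joins, simp)+
    ultimately have "\<not> harmonic_pencil (join (pt z) (pt a)) (join (pt z) (pt b))
        (join (pt z) (pt c)) (join (pt z) (pt d))"
      unfolding harmonic_pencil_def by simp
    moreover have "k1 \<noteq> 0" "k2 \<noteq> 0" using nonvertex True by auto
    ultimately show ?thesis using form True two by (simp add: d_def)
  next
    case False
    note lines = cross3_frame_vertices[where a = a and b = b and c = c and z = z,
        folded k1_k2_k3_def d_def p_q_def]
    have "cross3 p q \<noteq> (0, 0, 0)" using pq False z by (simp add: smult3_eq_zero_iff)
    moreover have "(- k1, - k2) \<noteq> (0, 0)" "(k3 - k1, k3 - k2) \<noteq> (0, 0)"
      using nonvertex(3,4) by auto
    ultimately have "harmonic_pencil (pt p) (pt q) (pt (cross3 z c)) (pt (cross3 z d))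
        \<longleftrightarrow> (- k1) * (k3 - k2) \<noteq> 0 \<and> (- k2) * (k3 - k1) = - ((- k1) * (k3 - k2))"
      using harmonic_pencil_pt_lincomb_iff[OF two]
        pt_eq_if_smult3[OF lines(1) False] pt_eq_if_smult3[OF lines(2) False] by presburger
    also have "\<dots> \<longleftrightarrow> 2 * k1 * k2 - k3 * k1 - k3 * k2 = 0"
      using harmonic_frame_coefficients_iff[OF False nonvertex(3,4)] .
    finally show ?thesis using joins form by (simp add: p_q_def d_def)
  qed
qed

lemma hcurve_frame_iff:
  fixes a b c :: "'a::field vec3"
  assumes two: "(2::'a) \<noteq> 0" and D: "det3 a b c \<noteq> 0"
  shows "Z \<in> hcurve (pt a) (pt c) (pt b) (pt (add3 (add3 a b) c))
    \<longleftrightarrow> harmonic_bilinear a b c (rep Z) (rep Z) = 0"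
proof -
  interpret symmetric_bilinear "harmonic_bilinear a b c"
    by (rule symmetric_bilinear_harmonic_bilinear)
  have vertex: "harmonic_bilinear a b c (rep (pt v)) (rep (pt v)) = 0"
    if "v \<in> {a, b, c, add3 (add3 a b) c}" for v
  proof -
    have "det3 a b (add3 (add3 a b) c) \<noteq> 0" using D by simp
    from det3_nonzero_imp_nonzero(3)[OF this] have "v \<noteq> (0, 0, 0)"
      using that det3_nonzero_imp_nonzero[OF D] by auto
    then obtain k where "rep (pt v) = smult3 k v" using rep_pt_smult3 by metis
    then show ?thesis using that by (auto simp: bilinear harmonic_bilinear_diag)
  qed
  then have "harmonic_bilinear a b c (rep Z) (rep Z) = 0"
    if "Z \<in> {pt a, pt b, pt c, pt (add3 (add3 a b) c)}"
    using that by blast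
  then show ?thesis
    using harmonic_pencil_frame_iff[OF two D rep_nonzero, of Z] unfolding hcurve_def by auto
qed

lemma pt_mem_hcurve_frame_iff:
  fixes a b c :: "'a::field vec3"
  assumes two: "(2::'a) \<noteq> 0" and D: "det3 a b c \<noteq> 0" and z: "z \<noteq> (0, 0, 0)"
  shows "pt z \<in> hcurve (pt a) (pt c) (pt b) (pt (add3 (add3 a b) c))
    \<longleftrightarrow> harmonic_bilinear a b c z z = 0"
proof -
  interpret symmetric_bilinear "harmonic_bilinear a b c"
    by (rule symmetric_bilinear_harmonic_bilinear)
  obtain k where "k \<noteq> 0" "rep (pt z) = smult3 k z" using rep_pt_smult3[OF z] .
  then show ?thesis using hcurve_frame_iff[OF two D] by (simp add: bilinear)
qed

lemma harmonic_curve_is_conic: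
  fixes S :: "'a::field proj set"
  assumes two: "(2::'a) \<noteq> 0" and "is_harmonic_curve S"
  shows "\<exists>B. nondegenerate_form B \<and> S = {P. B (rep P) (rep P) = 0}"
proof -
  obtain A C B D where gp: "general_position A C B D" and S: "S = hcurve A C B D"
    using assms(2) unfolding is_harmonic_curve_def by blast
  obtain a b c where D: "det3 a b c \<noteq> 0" and "A = pt a" "B = pt b" "C = pt c"
    "D = pt (add3 (add3 a b) c)"
    using quadrangle_standard_frame[OF gp] .
  then have "S = {P. harmonic_bilinear a b c (rep P) (rep P) = 0}"
    using hcurve_frame_iff[OF two D] S by blast
  then show ?thesis using nondegenerate_harmonic_bilinear[OF two D] by blast
qed

section \<open>Polarities whose absolute points form a conic\<close>

locale conic_polarity = nondegenerate_form B
  for B :: "'a::field vec3 \<Rightarrow> 'a vec3 \<Rightarrow> 'a" +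
  fixes pol :: "'a proj \<Rightarrow> 'a proj"
  assumes two: "(2::'a) \<noteq> 0"
    and polarity: "polarity pol"
    and absolute_points_eq: "absolute_points pol = {P. B (rep P) (rep P) = 0}"
begin

abbreviation conic :: "'a proj set" where
  "conic \<equiv> {P. B (rep P) (rep P) = 0}"

lemma mem_conic_iff_incid_pol: "P \<in> conic \<longleftrightarrow> incid P (pol P)"
  using absolute_points_eq unfolding absolute_points_def by blast

lemma incid_pol_commute: "incid P (pol Q) \<longleftrightarrow> incid Q (pol P)"
  using polarity unfolding polarity_def by blast

lemma pol_eq_iff: "pol P = pol Q \<longleftrightarrow> P = Q"
  using polarity bij_is_inj[of pol] unfolding polarity_def by (auto dest: injD)

lemma pol_pole: "pol (pole pol l) = l"
  using polarity unfolding polarity_def pole_def by (simp add: bij_is_surj surj_f_inv_f)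

lemma pt_mem_conic_iff:
  assumes "x \<noteq> (0, 0, 0)"
  shows "pt x \<in> conic \<longleftrightarrow> B x x = 0"
proof -
  obtain k where "k \<noteq> 0" "rep (pt x) = smult3 k x" using rep_pt_smult3[OF assms] .
  then show ?thesis by (simp add: bilinear)
qed

text \<open>Two conic points on the polar of one of them would have the same polar.\<close>
lemma conic_incid_pol_imp_eq:
  assumes P: "P \<in> conic" and X: "X \<in> conic" and "incid X (pol P)"
  shows "X = P"
proof (rule ccontr)
  assume ne: "X \<noteq> P"
  have PP: "incid P (pol P)" and XX: "incid X (pol X)"
    using P X mem_conic_iff_incid_pol by blast+
  have PX: "incid P (pol X)" using assms(3) incid_pol_commute by blast
  have "pol P = join X P" by (rule join_unique[OF ne assms(3) PP])
  moreover have "pol X = join X P" by (rule join_unique[OF ne XX PX])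
  ultimately show False using ne pol_eq_iff by metis
qed

text \<open>So the polar of a conic point \<open>P\<close> meets the conic only in \<open>P\<close>; it is the tangent.
  Indeed, if some \<open>x\<close> on it had \<open>B p x \<noteq> 0\<close>, then \<open>B x x \<cdot> p - 2 B p x \<cdot> x\<close> would be
  a second conic point on it.\<close>
lemma pol_conic_point:
  assumes P: "P \<in> conic"
  shows "pol P = pt (polar_vector (rep P))"
proof -
  define p L where "p = rep P" "L = rep (pol P)"
  have p: "p \<noteq> (0, 0, 0)" and L: "L \<noteq> (0, 0, 0)" by (simp_all add: p_L_def)
  have pL: "dot3 p L = 0"
    using P mem_conic_iff_incid_pol unfolding p_L_def incid_def by simp
  have Bpp: "B p p = 0" using P by (simp add: p_L_def)
  obtain x where x: "dot3 x L = 0" "cross3 p x \<noteq> (0, 0, 0)"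
    using exists_orthogonal_not_parallel[OF L p] .
  have Bpx: "B p x = 0"
  proof (rule ccontr)
    assume h: "B p x \<noteq> 0"
    define y where "y = lincomb (B x x) p (- 2 * B p x) x"
    have y: "y \<noteq> (0, 0, 0)" unfolding y_def using h two by (intro lincomb_nonzero[OF x(2)]) simp
    have "B y y = 0"
      unfolding y_def by (simp add: lincomb_left lincomb_right Bpp commute[of x p] algebra_simps)
    moreover have "dot3 y L = 0" unfolding y_def by (simp add: dot3_lincomb_left pL x(1))
    ultimately have "pt y = P"
      using conic_incid_pol_imp_eq[OF P] pt_mem_conic_iff[OF y] incid_pt[OF y L]
      by (metis p_L_def(2) pt_rep)
    then have "cross3 p y = (0, 0, 0)" using pt_eq_iff[OF p y] by (simp add: p_L_def)
    moreover have "cross3 p y = smult3 (- 2 * B p x) (cross3 p x)"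
      unfolding y_def by (rule cross3_lincomb_self(2))
    ultimately show False using h two x(2) by (simp add: smult3_eq_zero_iff)
  qed
  have "dot3 p (polar_vector p) = 0" "dot3 x (polar_vector p) = 0"
    using Bpp Bpx by (simp_all add: dot3_polar_vector)
  then obtain k where k: "polar_vector p = smult3 k (cross3 p x)"
    using orthogonal_pair_imp_smult3_cross3 x(2) by blast
  obtain k' where k': "L = smult3 k' (cross3 p x)"
    using orthogonal_pair_imp_smult3_cross3[OF pL x] by blast
  have "k \<noteq> 0" "k' \<noteq> 0" using k k' polar_vector_nonzero[OF p] L by auto
  then show ?thesis using k k' pt_smult3 by (metis p_L_def pt_rep)
qed

lemma incid_pol_conic_point_iff:
  assumes "A \<in> conic"
  shows "incid X (pol A) \<longleftrightarrow> B (rep A) (rep X) = 0"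
proof -
  have "incid X (pol A) \<longleftrightarrow> incid (pt (rep X)) (pt (polar_vector (rep A)))"
    using pol_conic_point[OF assms] by simp
  then show ?thesis
    using incid_pt[OF rep_nonzero polar_vector_nonzero[OF rep_nonzero]]
    by (simp add: dot3_polar_vector)
qed

lemma B_conic_points_nonzero:
  assumes "A \<in> conic" "X \<in> conic" "A \<noteq> X"
  shows "B (rep A) (rep X) \<noteq> 0"
proof -
  have "\<not> incid X (pol A)" using conic_incid_pol_imp_eq assms by blast
  then show ?thesis using incid_pol_conic_point_iff[OF assms(1)] by simp
qed

lemma B_pt_conic_points_nonzero:
  assumes "x \<noteq> (0, 0, 0)" "y \<noteq> (0, 0, 0)" "pt x \<in> conic" "pt y \<in> conic" "pt x \<noteq> pt y"
  shows "B x y \<noteq> 0"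
proof -
  obtain k l where "k \<noteq> 0" "rep (pt x) = smult3 k x" "l \<noteq> 0" "rep (pt y) = smult3 l y"
    using rep_pt_smult3 assms(1,2) by metis
  then show ?thesis using B_conic_points_nonzero[OF assms(3-5)] by (simp add: bilinear)
qed

lemma pol_pt_conic_point:
  assumes "x \<noteq> (0, 0, 0)" "pt x \<in> conic"
  shows "pol (pt x) = pt (polar_vector x)"
proof -
  obtain k where "k \<noteq> 0" "rep (pt x) = smult3 k x" using rep_pt_smult3[OF assms(1)] .
  then show ?thesis using pol_conic_point[OF assms(2)] by (simp add: polar_vector_smult3 pt_smult3)
qed

lemma pole_join_conic_points:
  assumes "A \<in> conic" "X \<in> conic" "A \<noteq> X"
  shows "pole pol (join A X) = meet (pol A) (pol X)"
    and "pole pol (join A X) = pt (cross3 (polar_vector (rep A)) (polar_vector (rep X)))"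
proof -
  have "incid A (pol (pole pol (join A X)))" "incid X (pol (pole pol (join A X)))"
    using incid_join[OF assms(3)] by (simp_all add: pol_pole)
  then have "incid (pole pol (join A X)) (pol A)" "incid (pole pol (join A X)) (pol X)"
    using incid_pol_commute by blast+
  moreover have ne: "pol A \<noteq> pol X" using assms(3) pol_eq_iff by blast
  ultimately show eq: "pole pol (join A X) = meet (pol A) (pol X)"
    using meet_unique[OF ne] by blast
  have "cross3 (polar_vector (rep A)) (polar_vector (rep X)) \<noteq> (0, 0, 0)"
    using ne pt_eq_iff[OF polar_vector_nonzero[OF rep_nonzero] polar_vector_nonzero[OF rep_nonzero]]
      pol_conic_point[OF assms(1)] pol_conic_point[OF assms(2)] by metis
  then show "pole pol (join A X) = pt (cross3 (polar_vector (rep A)) (polar_vector (rep X)))"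
    using eq meet_pt pol_conic_point[OF assms(1)] pol_conic_point[OF assms(2)] by simp
qed

lemma conic_not_collinear3:
  assumes "A \<in> conic" "X \<in> conic" "Y \<in> conic" "distinct [A, X, Y]"
  shows "\<not> collinear3 A X Y"
proof
  assume "collinear3 A X Y"
  then have "det3 (rep A) (rep X) (rep Y) = 0"
    using collinear3_pt_iff_det3[of "rep A" "rep X" "rep Y"] by simp
  moreover have "A \<noteq> X" using assms(4) by simp
  ultimately obtain s t where st: "rep Y = lincomb s (rep A) t (rep X)"
    using det3_zero_imp_lincomb[OF cross3_rep_nonzero] by blast
  have "B (rep Y) (rep Y) = 2 * s * t * B (rep A) (rep X)"
    using assms(1,2) by (simp add: st lincomb_left lincomb_right commute[of "rep X" "rep A"]
        algebra_simps)
  then have "s = 0 \<or> t = 0"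
    using assms(3) B_conic_points_nonzero[OF assms(1,2) \<open>A \<noteq> X\<close>] two by simp
  then have "rep Y = smult3 t (rep X) \<or> rep Y = smult3 s (rep A)"
    using st by (auto simp: lincomb_def)
  then have "Y = X \<or> Y = A"
    using rep_nonzero[of Y] pt_smult3 pt_rep by (metis smult3_zero)
  then show False using assms(4) by auto
qed

lemma frame_on_conic:
  fixes a b c :: "'a vec3"
  assumes D: "det3 a b c \<noteq> 0"
    and on: "pt a \<in> conic" "pt b \<in> conic" "pt c \<in> conic" "pt (add3 (add3 a b) c) \<in> conic"
  shows "B a a = 0" "B b b = 0" "B c c = 0" "B a b + B a c + B b c = 0"
    "B a b \<noteq> 0" "B a c \<noteq> 0" "B b c \<noteq> 0"
proof -
  have nz: "a \<noteq> (0, 0, 0)" "b \<noteq> (0, 0, 0)" "c \<noteq> (0, 0, 0)"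
    using det3_nonzero_imp_nonzero[OF D] .
  then show diag: "B a a = 0" "B b b = 0" "B c c = 0" using on pt_mem_conic_iff by blast+
  have "det3 a b (add3 (add3 a b) c) \<noteq> 0" using D by simp
  then have "add3 (add3 a b) c \<noteq> (0, 0, 0)" by (rule det3_nonzero_imp_nonzero(3))
  then have "B (add3 (add3 a b) c) (add3 (add3 a b) c) = 0" using on(4) pt_mem_conic_iff by blast
  then have "2 * (B a b + B a c + B b c) = 0" by (simp only: frame_vertex_sum[OF diag])
  then show "B a b + B a c + B b c = 0"
    using two mult_eq_0_iff[of "2::'a" "B a b + B a c + B b c"] by blast
  have "cross3 a b \<noteq> (0, 0, 0)" "cross3 a c \<noteq> (0, 0, 0)" "cross3 b c \<noteq> (0, 0, 0)"
    using D det3_swap(2)[of a b c] det3_rotate[of a b c] by (auto simp: det3_def)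
  then have "pt a \<noteq> pt b" "pt a \<noteq> pt c" "pt b \<noteq> pt c" using pt_eq_iff nz by blast+
  then show "B a b \<noteq> 0" "B a c \<noteq> 0" "B b c \<noteq> 0"
    using B_pt_conic_points_nonzero on nz by blast+
qed

lemma pole_on_diagonal_frame_iff:
  fixes a b c :: "'a vec3"
  defines "d \<equiv> add3 (add3 a b) c"
  assumes D: "det3 a b c \<noteq> 0"
    and on: "pt a \<in> conic" "pt b \<in> conic" "pt c \<in> conic" "pt d \<in> conic"
  shows "incid (pole pol (join (pt a) (pt b))) (join (pt c) (pt d)) \<longleftrightarrow> B a c = B b c"
proof -
  note frame = frame_on_conic[OF D on[unfolded d_def]]
  have nz: "a \<noteq> (0, 0, 0)" "b \<noteq> (0, 0, 0)" using det3_nonzero_imp_nonzero[OF D] by auto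
  have "cross3 a b \<noteq> (0, 0, 0)" using D by (auto simp: det3_def)
  then have ab: "pt a \<noteq> pt b" using pt_eq_iff nz by blast
  have "det3 c d a = - det3 a b c"
    by (simp add: d_def det3_rotate[of c b a] det3_swap(1)[of b a c])
  then have cd: "cross3 c d \<noteq> (0, 0, 0)" using D by (auto simp: det3_def)
  have "pol (pt a) \<noteq> pol (pt b)" using ab pol_eq_iff by blast
  then have pab: "cross3 (polar_vector a) (polar_vector b) \<noteq> (0, 0, 0)"
    using pt_eq_iff[OF polar_vector_nonzero polar_vector_nonzero] nz on
    by (simp add: pol_pt_conic_point)
  have "pole pol (join (pt a) (pt b)) = pt (cross3 (polar_vector a) (polar_vector b))"
    using pole_join_conic_points(1)[OF on(1,2) ab] meet_pt[OF pab] nz on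
    by (simp add: pol_pt_conic_point)
  then have "incid (pole pol (join (pt a) (pt b))) (join (pt c) (pt d))
      \<longleftrightarrow> dot3 (cross3 (polar_vector a) (polar_vector b)) (cross3 c d) = 0"
    using incid_pt[OF pab cd] join_pt[OF cd] by simp
  also have "\<dots> \<longleftrightarrow> B a c * B b d - B a d * B b c = 0"
    by (simp add: binet_cauchy3 dot3_commute[of "polar_vector _"] dot3_polar_vector)
  also have "\<dots> \<longleftrightarrow> B a b * (B a c - B b c) = 0"
    unfolding d_def using frame(1,2)
    by (simp add: add_right commute[of b a] algebra_simps)
  finally show ?thesis using frame(5) by simp
qed

text \<open>If the two conics differed, the point with frame coordinates
  \<open>(1 + t, t (1 + t), 2 t)\<close> would lie on the harmonic curve but not on the conic; over
  \<open>GF(3)\<close>, where no such \<open>t \<notin> {0, 1, -1}\<close> exists, the frame relations alone force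
  \<open>B a c = B b c\<close>.\<close>
lemma hcurve_frame_eq_conic_imp:
  fixes a b c :: "'a vec3"
  assumes D: "det3 a b c \<noteq> 0"
    and on: "pt a \<in> conic" "pt b \<in> conic" "pt c \<in> conic" "pt (add3 (add3 a b) c) \<in> conic"
    and eq: "hcurve (pt a) (pt c) (pt b) (pt (add3 (add3 a b) c)) = conic"
  shows "B a c = B b c"
proof (rule ccontr)
  assume ne: "B a c \<noteq> B b c"
  note frame = frame_on_conic[OF D on]
  show False
  proof (cases "\<exists>t::'a. t \<noteq> 0 \<and> t \<noteq> 1 \<and> t \<noteq> -1")
    case True
    then obtain t :: 'a where t: "t \<noteq> 0" "t \<noteq> 1" "1 + t \<noteq> 0"
      by (metis add.commute add_eq_0_iff)
    define z where "z = add3 (add3 (smult3 (1 + t) a) (smult3 (t * (1 + t)) b)) (smult3 (2 * t) c)"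
    have k: "det3 z b c = (1 + t) * det3 a b c" "det3 a z c = t * (1 + t) * det3 a b c"
      "det3 a b z = 2 * t * det3 a b c"
      unfolding z_def by simp_all
    then have "det3 a b z \<noteq> 0" using t two D by simp
    then have z: "z \<noteq> (0, 0, 0)" by (rule det3_nonzero_imp_nonzero(3))
    have "harmonic_bilinear a b c z z = 0"
      by (simp add: harmonic_bilinear_diag k algebra_simps)
    then have "pt z \<in> conic" using eq pt_mem_hcurve_frame_iff[OF two D z] by blast
    then have "B z z = 0" using pt_mem_conic_iff z by blast
    moreover have "B z z = 2 * t * (1 + t) * ((B b c - B a c) * (t - 1))"
      unfolding z_def using frame_test_point_form[OF frame(1-4)] .
    ultimately show False using ne t two by simp
  next
    case False
    then have "B a c \<in> {1, -1}" "B b c \<in> {1, -1}" using frame(6,7) by auto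
    then have "B a c = - B b c" using ne by auto
    then show False using frame(4,5) by simp
  qed
qed

lemma hcurve_frame_eq_conic_iff:
  fixes a b c :: "'a vec3"
  assumes D: "det3 a b c \<noteq> 0"
    and on: "pt a \<in> conic" "pt b \<in> conic" "pt c \<in> conic" "pt (add3 (add3 a b) c) \<in> conic"
  shows "hcurve (pt a) (pt c) (pt b) (pt (add3 (add3 a b) c)) = conic \<longleftrightarrow> B a c = B b c"
proof
  assume sym: "B a c = B b c"
  note frame = frame_on_conic[OF D on]
  have "B a b = - 2 * B a c" using frame(4) sym by (simp add: algebra_simps eq_neg_iff_add_eq_0)
  then have "(det3 a b c)\<^sup>2 * B z z = - B a c * harmonic_bilinear a b c z z" for z
    using conic_frame_equation[OF frame(1-3), of z] sym
    by (simp add: harmonic_bilinear_diag algebra_simps)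
  then have "B (rep Z) (rep Z) = 0 \<longleftrightarrow> harmonic_bilinear a b c (rep Z) (rep Z) = 0" for Z
    using D frame(6) by (metis mult_eq_0_iff neg_equal_0_iff_equal power_not_zero)
  then show "hcurve (pt a) (pt c) (pt b) (pt (add3 (add3 a b) c)) = conic"
    using hcurve_frame_iff[OF two D] by blast
qed (rule hcurve_frame_eq_conic_imp[OF D on])

lemma hcurve_eq_conic_iff_pole_on_diagonal:
  assumes gp: "general_position A C X D" and on: "{A, C, X, D} \<subseteq> conic"
  shows "hcurve A C X D = conic \<longleftrightarrow> incid (pole pol (join A X)) (join C D)"
proof -
  obtain a b c where D: "det3 a b c \<noteq> 0"
    and pts: "A = pt a" "X = pt b" "C = pt c" "D = pt (add3 (add3 a b) c)"
    using quadrangle_standard_frame[OF gp] .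
  have "pt a \<in> conic" "pt b \<in> conic" "pt c \<in> conic" "pt (add3 (add3 a b) c) \<in> conic"
    using on pts by auto
  then show ?thesis
    using hcurve_frame_eq_conic_iff[OF D] pole_on_diagonal_frame_iff[OF D] pts by simp
qed

lemma pole_join_not_on_conic:
  assumes "A \<in> conic" "X \<in> conic" "A \<noteq> X"
  shows "pole pol (join A X) \<notin> conic"
proof
  assume Q: "pole pol (join A X) \<in> conic"
  have "pol A \<noteq> pol X" using assms(3) pol_eq_iff by simp
  then have "incid (pole pol (join A X)) (pol A)" "incid (pole pol (join A X)) (pol X)"
    using pole_join_conic_points(1)[OF assms] incid_meet by simp_all
  then show False using conic_incid_pol_imp_eq[OF _ Q] assms by metis
qed

lemma general_position_conic_points:
  assumes "distinct [A, C, X, D]" "{A, C, X, D} \<subseteq> conic"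
  shows "general_position A C X D"
  unfolding general_position_def using assms conic_not_collinear3 by auto

lemma harm_refl_pole_conic_point:
  assumes "A \<in> conic" "X \<in> conic" "C \<in> conic" "distinct [A, C, X]"
  defines "Q \<equiv> pole pol (join A X)"
  defines "D \<equiv> harm_refl Q (join A X) C"
  shows "D \<in> conic" "distinct [A, C, X, D]" "incid Q (join C D)"
proof -
  have AX: "A \<noteq> X" using assms(4) by simp
  define a b c where "a = rep A" "b = rep X" "c = rep C"
  define L w where "L = cross3 a b" "w = cross3 (polar_vector a) (polar_vector b)"
  have c: "c \<noteq> (0, 0, 0)" and C: "C = pt c" by (simp_all add: a_b_c_def)
  have qL: "join A X = pt L" by (simp add: L_w_def a_b_c_def join_rep[OF AX])
  have Qw: "Q = pt w"
    using pole_join_conic_points(2)[OF assms(1,2) AX] by (simp add: Q_def L_w_def a_b_c_def)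
  have "det3 a b c \<noteq> 0"
    unfolding a_b_c_def using conic_not_collinear3[OF assms(1,2,3)] assms(4)
    by (intro det3_rep_nonzero_if_not_collinear) auto
  then have cL: "dot3 c L \<noteq> 0" by (simp add: L_w_def det3_as_dot3)
  have "dot3 w L = - (B a b)\<^sup>2"
    using assms(1,2) by (simp add: L_w_def a_b_c_def dot3_cross3_polar_vectors)
  then have wL: "dot3 w L \<noteq> 0"
    using B_conic_points_nonzero[OF assms(1,2) AX] by (simp add: a_b_c_def)
  then have w: "w \<noteq> (0, 0, 0)" by auto
  have "pt c \<noteq> pt w" using pole_join_not_on_conic[OF assms(1,2) AX] assms(3) Qw C Q_def by auto
  then have cw: "cross3 c w \<noteq> (0, 0, 0)" using pt_eq_iff c w by blast
  define d where "d = lincomb (2 * dot3 c L) w (- dot3 w L) c"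
  have Dd: "D = pt d" using harm_refl_pt[OF two wL cL cw] Qw qL C by (simp add: D_def d_def)
  have cd: "cross3 c d = smult3 (2 * dot3 c L) (cross3 c w)"
    unfolding d_def lincomb_def by (simp add: cross3_add3_right cross3_smult3_right)
  then have cd_nz: "cross3 c d \<noteq> (0, 0, 0)" using cw cL two by (simp add: smult3_eq_zero_iff)
  then have d: "d \<noteq> (0, 0, 0)" by auto
  obtain k where "polar_vector w = smult3 k L"
    using polar_vector_pole cross3_rep_nonzero[OF AX] by (metis L_w_def a_b_c_def)
  then have "B d d = 0" using reflection_in_pole_scales_form assms(3) by (simp add: d_def a_b_c_def)
  then show "D \<in> conic" using pt_mem_conic_iff[OF d] Dd by simp
  have "dot3 d L = dot3 c L * dot3 w L" by (simp add: d_def dot3_lincomb_left algebra_simps)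
  then have "\<not> incid D (join A X)"
    using incid_pt[OF d] cL wL qL Dd L_w_def cross3_rep_nonzero[OF AX] by (simp add: a_b_c_def)
  then have "D \<noteq> A" "D \<noteq> X" using incid_join[OF AX] by auto
  moreover have "D \<noteq> C" using pt_eq_iff[OF c d] cd_nz Dd C by metis
  ultimately show "distinct [A, C, X, D]" using assms(4) by auto
  have "dot3 w (cross3 c d) = 0" by (simp add: cd dot3_smult3_right)
  moreover have "join C D = pt (cross3 c d)" using join_pt[OF cd_nz] Dd C by simp
  ultimately show "incid Q (join C D)" using incid_pt[OF w cd_nz] Qw by simp
qed

lemma harm_refl_pole_completes_quadrangle:
  assumes "distinct [A, C, X]" "{A, C, X} \<subseteq> conic"
  defines "Q \<equiv> pole pol (join A X)"
  defines "D \<equiv> harm_refl Q (join A X) C"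
  shows "Q = meet (pol A) (pol X) \<and> general_position A C X D \<and> D \<in> conic
    \<and> hcurve A C X D = conic"
proof -
  have on: "A \<in> conic" "X \<in> conic" "C \<in> conic" using assms(2) by auto
  note refl = harm_refl_pole_conic_point[OF on assms(1), folded Q_def, folded D_def]
  have gp: "general_position A C X D"
    using general_position_conic_points refl(1,2) assms(2) by simp
  moreover have "hcurve A C X D = conic"
    using hcurve_eq_conic_iff_pole_on_diagonal[OF gp] refl(1,3) assms(2) by (simp add: Q_def)
  ultimately show ?thesis
    using pole_join_conic_points(1)[OF on(1,2)] assms(1) refl(1) by (simp add: Q_def)
qed

end

theorem mainTheorem8:
  fixes S :: "'a::field point set"
    and pol :: "'a point \<Rightarrow> 'a line"
  assumes char_not_2: "(2::'a) \<noteq> 0"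
    and harm: "is_harmonic_curve S"
    and pol: "polarity pol"
    and abs: "absolute_points pol = S"
  shows "(\<forall>A C B D. general_position A C B D \<and> {A, C, B, D} \<subseteq> S \<longrightarrow>
            (hcurve A C B D = S \<longleftrightarrow> incid (pole pol (join A B)) (join C D)))
       \<and> (\<forall>A C B. distinct [A, C, B] \<and> {A, C, B} \<subseteq> S \<longrightarrow>
            (let q = join A B; Q = pole pol q; D = harm_refl Q q C in
               Q = meet (pol A) (pol B) \<and>
               general_position A C B D \<and> D \<in> S \<and> hcurve A C B D = S))"
proof -
  obtain F where F: "nondegenerate_form F" and S: "S = {P. F (rep P) (rep P) = 0}"
    using harmonic_curve_is_conic[OF char_not_2 harm] by blast
  interpret conic_polarity F pol
    using F char_not_2 pol abs S by (intro conic_polarity.intro conic_polarity_axioms.intro) auto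
  have "\<forall>A C B D. general_position A C B D \<and> {A, C, B, D} \<subseteq> S \<longrightarrow>
      (hcurve A C B D = S \<longleftrightarrow> incid (pole pol (join A B)) (join C D))"
    unfolding S using hcurve_eq_conic_iff_pole_on_diagonal by blast
  moreover have "\<forall>A C B. distinct [A, C, B] \<and> {A, C, B} \<subseteq> S \<longrightarrow>
      (let q = join A B; Q = pole pol q; D = harm_refl Q q C in
        Q = meet (pol A) (pol B) \<and> general_position A C B D \<and> D \<in> S \<and> hcurve A C B D = S)"
    unfolding S Let_def using harm_refl_pole_completes_quadrangle by blast
  ultimately show ?thesis ..
qed

end
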